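(* Let $M_2\ge1$, $M_1=2^{M_2-1}$, and define the $M_1\times M_2$ matrix $g_{x_1,x_2}=1-2\big(\lfloor 2^{1-x_2}(x_1-1)\rfloor \bmod 2\big)$. Then all singular values of $g$ equal $\sqrt{M_1}$, and the quantum value of $g$ equals $M_1\sqrt{M_2}$ and is attained by a quantum strategy.
   Context: The quantum value is the supremum of $\sum_{x_1,x_2}g_{x_1,x_2}\operatorname{tr}(\rho\,\mathcal A_1(x_1)\otimes\mathcal A_2(x_2))$ over finite-dimensional complex Hilbert spaces $\mathcal H_1,\mathcal H_2$, density operators $\rho$ on $\mathcal H_1\otimes\mathcal H_2$ and Hermitian operators $\mathcal A_i(x_i)$ on $\mathcal H_i$ with eigenvalues in $[-1,1]$. *)

theory Defs
  imports "HOL-Analysis.Analysis" "Jordan_Normal_Form.Matrix" "Jordan_Normal_Form.Char_Poly"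
begin

definition g_entry :: "nat \<Rightarrow> nat \<Rightarrow> real" where
  "g_entry x1 x2 = 1 - 2 * of_int (\<lfloor>2 powr (1 - real x2) * (real x1 - 1)\<rfloor> mod 2)"

text \<open>The M1 x M2 matrix g with M1 = 2^(M2-1); row i / column j correspond to x1 = i+1, x2 = j+1.\<close>
definition g_mat :: "nat \<Rightarrow> real mat" where
  "g_mat M2 = mat (2 ^ (M2 - 1)) M2 (\<lambda>(i, j). g_entry (i + 1) (j + 1))"

definition singular_values :: "real mat \<Rightarrow> real set" where
  "singular_values A =
     {sqrt l | l. eigenvalue (if dim_col A \<le> dim_row A then transpose_mat A * A
                              else A * transpose_mat A) l}"

definition mtrace :: "'a :: comm_ring_1 mat \<Rightarrow> 'a" where
  "mtrace A = (\<Sum>i<dim_row A. A $$ (i, i))"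

definition adj :: "complex mat \<Rightarrow> complex mat" where
  "adj A = mat (dim_col A) (dim_row A) (\<lambda>(i, j). cnj (A $$ (j, i)))"

definition hermitian :: "complex mat \<Rightarrow> bool" where
  "hermitian A \<longleftrightarrow> A \<in> carrier_mat (dim_row A) (dim_row A) \<and> adj A = A"

definition kron :: "complex mat \<Rightarrow> complex mat \<Rightarrow> complex mat" where
  "kron A B = mat (dim_row A * dim_row B) (dim_col A * dim_col B)
     (\<lambda>(r, c). A $$ (r div dim_row B, c div dim_col B) * B $$ (r mod dim_row B, c mod dim_col B))"

definition density_op :: "nat \<Rightarrow> complex mat \<Rightarrow> bool" where
  "density_op d \<rho> \<longleftrightarrow> \<rho> \<in> carrier_mat d d \<and> hermitian \<rho> \<and>
     (\<forall>v \<in> carrier_vec d. Re (conjugate v \<bullet> (\<rho> *\<^sub>v v)) \<ge> 0) \<and> mtrace \<rho> = 1"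

definition observable :: "nat \<Rightarrow> complex mat \<Rightarrow> bool" where
  "observable d A \<longleftrightarrow> A \<in> carrier_mat d d \<and> hermitian A \<and>
     (\<forall>l. eigenvalue A l \<longrightarrow> l \<in> \<real> \<and> -1 \<le> Re l \<and> Re l \<le> 1)"

definition quantum_strategy ::
  "nat \<Rightarrow> nat \<Rightarrow> nat \<Rightarrow> nat \<Rightarrow> complex mat \<Rightarrow> (nat \<Rightarrow> complex mat) \<Rightarrow> (nat \<Rightarrow> complex mat) \<Rightarrow> bool" where
  "quantum_strategy M1 M2 d1 d2 \<rho> A1 A2 \<longleftrightarrow> density_op (d1 * d2) \<rho> \<and>
     (\<forall>x1\<in>{1..M1}. observable d1 (A1 x1)) \<and> (\<forall>x2\<in>{1..M2}. observable d2 (A2 x2))"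

definition strategy_value :: "real mat \<Rightarrow> complex mat \<Rightarrow> (nat \<Rightarrow> complex mat) \<Rightarrow> (nat \<Rightarrow> complex mat) \<Rightarrow> real" where
  "strategy_value g \<rho> A1 A2 =
     (\<Sum>x1\<in>{1..dim_row g}. \<Sum>x2\<in>{1..dim_col g}.
        g $$ (x1 - 1, x2 - 1) * Re (mtrace (\<rho> * kron (A1 x1) (A2 x2))))"

definition quantum_value :: "real mat \<Rightarrow> ereal" where
  "quantum_value g = (SUP s \<in> {(d1, d2, \<rho>, A1, A2). quantum_strategy (dim_row g) (dim_col g) d1 d2 \<rho> A1 A2}.
       ereal (case s of (d1, d2, \<rho>, A1, A2) \<Rightarrow> strategy_value g \<rho> A1 A2))"

end

theory Submission
  imports Defs "HOL-Real_Asymp.Real_Asymp" "Jordan_Normal_Form.Spectral_Radius"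
begin

text \<open>
  Row \<open>x1\<close> of \<open>g\<close> lists the bits of \<open>x1 - 1\<close> as signs, so distinct columns of \<open>g\<close> are
  orthogonal and \<open>g\<^sup>T g = M1 I\<close>; this gives the singular values.

  Upper bound: a density operator is a convex combination of pure states. Writing a pure state
  as a \<open>d1 \<times> d2\<close> coefficient matrix \<open>R\<close>, its value is the sum over \<open>x1\<close> of
  \<open>Re \<langle>A(x1) R, \<Sum>x2. g(x1,x2) R B(x2)\<^sup>T\<rangle>\<close>. AM-GM with weight \<open>sqrt M2\<close> on each inner
  product, contractivity of the observables and orthogonality of the columns of \<open>g\<close> bound it
  by \<open>M1 sqrt M2 \<parallel>R\<parallel>\<^sup>2 = M1 sqrt M2\<close>.

  Lower bound: with pairwise anticommuting Hermitian involutions \<open>C(0), \<dots>, C(M2 - 1)\<close>, Alice's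
  observable \<open>\<Sum>j. g(x1,j) C(j) / sqrt M2\<close> squares to the identity. Against Bob's
  \<open>C(x2)\<^sup>T\<close> on a maximally entangled state each term of the value is \<open>1 / sqrt M2\<close>.
\<close>

no_notation vec_nth (infixl "$" 90)
no_notation inner (infix "\<bullet>" 70)

lemma sum_lessThan_add: "(\<Sum>i<a + b. f i) = (\<Sum>i<a. f i) + (\<Sum>i<b. f (a + i))"
  for a b :: nat
  by (induction b) (simp_all add: add.assoc)

lemma sum_lessThan_mult: "(\<Sum>p<d1 * d2. f p) = (\<Sum>i<d1. \<Sum>j<d2. f (i * d2 + j))"
  for d1 d2 :: nat
proof (induction d1)
  case 0 thus ?case by simp
next
  case (Suc d1)
  have "(\<Sum>p<Suc d1 * d2. f p) = (\<Sum>p<d1 * d2 + d2. f p)" by (simp add: add.commute)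
  also have "\<dots> = (\<Sum>p<d1 * d2. f p) + (\<Sum>j<d2. f (d1 * d2 + j))" by (rule sum_lessThan_add)
  finally show ?case using Suc by simp
qed

lemma sum_rotate3:
  "(\<Sum>a\<in>A. \<Sum>b\<in>B. \<Sum>c\<in>C. f a b c) = (\<Sum>b\<in>B. \<Sum>c\<in>C. \<Sum>a\<in>A. f a b c)"
  by (subst sum.swap) (rule sum.cong[OF refl], rule sum.swap)

lemma sum_reverse3:
  "(\<Sum>a\<in>A. \<Sum>b\<in>B. \<Sum>c\<in>C. f a b c) = (\<Sum>c\<in>C. \<Sum>b\<in>B. \<Sum>a\<in>A. f a b c)"
  by (subst sum_rotate3) (rule sum.swap)

lemma mult_mat_vec_index_sum:
  "A \<in> carrier_mat n m \<Longrightarrow> y \<in> carrier_vec m \<Longrightarrow> i < n \<Longrightarrow> (A *\<^sub>v y) $ i = (\<Sum>j<m. A $$ (i, j) * y $ j)"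
  by (auto simp: scalar_prod_def lessThan_atLeast0 intro!: sum.cong)

lemma mult_mat_index_sum:
  "A \<in> carrier_mat n m \<Longrightarrow> B \<in> carrier_mat m p \<Longrightarrow> i < n \<Longrightarrow> j < p \<Longrightarrow>
    (A * B) $$ (i, j) = (\<Sum>k<m. A $$ (i, k) * B $$ (k, j))"
  by (auto simp: scalar_prod_def lessThan_atLeast0 intro!: sum.cong)

lemma adj_self_index:
  assumes "adj A = A" "A \<in> carrier_mat n n" "i < n" "j < n"
  shows "cnj (A $$ (i, j)) = A $$ (j, i)"
proof -
  have "adj A $$ (j, i) = cnj (A $$ (i, j))" using assms(2-4) by (simp add: adj_def)
  thus ?thesis using assms(1) by simp
qed

lemma mtrace_mult:
  assumes "A \<in> carrier_mat m m" "B \<in> carrier_mat m m"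
  shows "mtrace (A * B) = (\<Sum>i<m. \<Sum>k<m. A $$ (i, k) * B $$ (k, i))"
proof -
  have "mtrace (A * B) = (\<Sum>i<m. (A * B) $$ (i, i))" using assms by (simp add: mtrace_def)
  also have "\<dots> = (\<Sum>i<m. \<Sum>k<m. A $$ (i, k) * B $$ (k, i))"
    by (intro sum.cong refl mult_mat_index_sum[OF assms]) auto
  finally show ?thesis .
qed

lemma mtrace_comm:
  assumes "A \<in> carrier_mat m m" "B \<in> carrier_mat m m"
  shows "mtrace (A * B) = mtrace (B * A)"
  unfolding mtrace_mult[OF assms] mtrace_mult[OF assms(2,1)]
  by (subst sum.swap) (simp add: mult.commute)

lemma mtrace_uminus: "M \<in> carrier_mat m m \<Longrightarrow> mtrace (- M) = - mtrace M"
  unfolding mtrace_def by (simp add: sum_negf)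

section \<open>The sign matrix\<close>

definition bit_sign :: "nat \<Rightarrow> nat \<Rightarrow> real" where
  "bit_sign i j = (if odd (i div 2^j) then -1 else 1)"

lemma g_entry_Suc_Suc: "g_entry (Suc i) (Suc j) = bit_sign i j"
proof -
  have "2 powr (1 - real (Suc j)) * (real (Suc i) - 1) = real i / real (2^j)"
    by (simp add: powr_minus powr_realpow divide_inverse)
  hence fl: "\<lfloor>2 powr (1 - real (Suc j)) * (real (Suc i) - 1)\<rfloor> = int (i div 2^j)"
    by (simp only: floor_divide_of_nat_eq)
  show ?thesis
  proof (cases "odd (i div 2^j)")
    case True
    hence "int (i div 2^j) mod 2 = 1" by presburger
    thus ?thesis unfolding g_entry_def bit_sign_def fl using True by simp
  next
    case False
    hence "int (i div 2^j) mod 2 = 0" by presburger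
    thus ?thesis unfolding g_entry_def bit_sign_def fl using False by simp
  qed
qed

lemma bit_sign_square: "bit_sign i j * bit_sign i j = 1"
  by (simp add: bit_sign_def)

lemma bit_sign_high: "i < 2^m \<Longrightarrow> m \<le> j \<Longrightarrow> bit_sign i j = 1"
proof -
  assume "i < 2^m" "m \<le> j"
  hence "i < 2^j" using power_increasing[of m j "2::nat"] by linarith
  thus ?thesis by (simp add: bit_sign_def)
qed

lemma bit_sign_add_pow2:
  assumes i: "i < 2^m"
  shows "bit_sign (i + 2^m) j = (if j < m then bit_sign i j else if j = m then -1 else 1)"
proof (cases "j < m")
  case True
  have d: "(2::nat)^j dvd 2^m" using True by (simp add: le_imp_power_dvd)
  have "(i + 2^m) div 2^j = i div 2^j + 2^m div 2^j"
    by (rule div_plus_div_distrib_dvd_right[OF d])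
  moreover have "(2::nat)^m div 2^j = 2^(m-j)" using True by (simp add: power_diff)
  moreover have "even ((2::nat)^(m-j))" using True by simp
  ultimately show ?thesis using True by (simp add: bit_sign_def)
next
  case False
  show ?thesis
  proof (cases "j = m")
    case True
    have "(i + 2^m) div 2^m = 1" using i by simp
    thus ?thesis using True by (simp add: bit_sign_def)
  next
    case F2: False
    hence "(2::nat)^(Suc m) \<le> 2^j" using False by (intro power_increasing) auto
    hence "i + 2^m < 2^j" using i by simp
    thus ?thesis using False F2 by (simp add: bit_sign_def)
  qed
qed

lemma bit_sign_orthogonal_lt:
  "j < k \<Longrightarrow> j < m \<Longrightarrow> (\<Sum>i<2^m. bit_sign i j * bit_sign i k) = 0"
proof (induction m arbitrary: j k)
  case 0 thus ?case by simp
next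
  case (Suc m)
  have split: "(\<Sum>i<2^Suc m. bit_sign i j * bit_sign i k) =
      (\<Sum>i<2^m. bit_sign i j * bit_sign i k)
      + (\<Sum>i<2^m. bit_sign (i + 2^m) j * bit_sign (i + 2^m) k)"
    using sum_lessThan_add[where a = "2^m" and b = "2^m" and f = "\<lambda>i. bit_sign i j * bit_sign i k"]
    by (simp add: mult_2 add.commute)
  have high: "\<And>i l. i \<in> {..<2^m} \<Longrightarrow> m \<le> l \<Longrightarrow> bit_sign i l = 1"
    using bit_sign_high by auto
  show ?case
  proof (cases "j < m")
    case jm: True
    show ?thesis
    proof (cases "k < m")
      case True
      have "(\<Sum>i<2^m. bit_sign (i + 2^m) j * bit_sign (i + 2^m) k)
          = (\<Sum>i<2^m. bit_sign i j * bit_sign i k)"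
        using True jm by (intro sum.cong) (auto simp: bit_sign_add_pow2)
      thus ?thesis using split Suc.IH Suc.prems(1) jm by simp
    next
      case False
      \<comment> \<open>bit \<open>k\<close> is constant on each half, so only the balance of bit \<open>j\<close> matters\<close>
      have "(\<Sum>i<2^m. bit_sign i j) = (\<Sum>i<2^m. bit_sign i j * bit_sign i m)"
        by (intro sum.cong) (auto simp: high)
      hence balanced: "(\<Sum>i<2^m. bit_sign i j) = 0" using Suc.IH[OF jm jm] by simp
      have a: "(\<Sum>i<2^m. bit_sign i j * bit_sign i k) = (\<Sum>i<2^m. bit_sign i j)"
        using False by (intro sum.cong) (auto simp: high)
      have b: "(\<Sum>i<2^m. bit_sign (i + 2^m) j * bit_sign (i + 2^m) k)
          = (\<Sum>i<2^m. bit_sign i j * (if k = m then -1 else 1))"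
        using False jm by (intro sum.cong) (auto simp: bit_sign_add_pow2)
      show ?thesis using split a b balanced by (simp add: sum_distrib_right[symmetric])
    qed
  next
    case False
    hence jm: "j = m" and km: "m < k" using Suc.prems by simp_all
    have a: "(\<Sum>i<2^m. bit_sign i j * bit_sign i k) = (\<Sum>i<(2::nat)^m. 1)"
      using jm km by (intro sum.cong) (auto simp: high)
    have b: "(\<Sum>i<2^m. bit_sign (i + 2^m) j * bit_sign (i + 2^m) k) = (\<Sum>i<(2::nat)^m. -1)"
      using jm km by (intro sum.cong) (auto simp: bit_sign_add_pow2)
    show ?thesis using split a b by simp
  qed
qed

lemma bit_sign_orthogonal:
  assumes "j \<le> m" "k \<le> m"
  shows "(\<Sum>i<2^m. bit_sign i j * bit_sign i k) = (if j = k then 2^m else 0)"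
proof -
  consider "j = k" | "j < k" | "k < j" by linarith
  thus ?thesis
  proof cases
    case 3
    hence "(\<Sum>i<2^m. bit_sign i k * bit_sign i j) = 0"
      using assms by (intro bit_sign_orthogonal_lt) auto
    thus ?thesis using 3 by (simp add: mult.commute)
  qed (use assms bit_sign_orthogonal_lt in \<open>auto simp: bit_sign_square\<close>)
qed

lemma dim_row_g_mat [simp]: "dim_row (g_mat M2) = 2^(M2 - 1)"
  and dim_col_g_mat [simp]: "dim_col (g_mat M2) = M2"
  by (simp_all add: g_mat_def)

lemma g_mat_index: "i < 2^(M2 - 1) \<Longrightarrow> j < M2 \<Longrightarrow> g_mat M2 $$ (i, j) = bit_sign i j"
  by (simp add: g_mat_def g_entry_Suc_Suc)

lemma transpose_g_mat_mult_g_mat: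
  assumes "M2 \<ge> 1"
  shows "transpose_mat (g_mat M2) * g_mat M2 = real (2^(M2 - 1)) \<cdot>\<^sub>m 1\<^sub>m M2"
proof (rule eq_matI)
  fix j k assume "j < dim_row (real (2^(M2 - 1)) \<cdot>\<^sub>m 1\<^sub>m M2)"
    and "k < dim_col (real (2^(M2 - 1)) \<cdot>\<^sub>m 1\<^sub>m M2)"
  hence j: "j < M2" and k: "k < M2" by auto
  have "(transpose_mat (g_mat M2) * g_mat M2) $$ (j, k) = (\<Sum>i<2^(M2 - 1). bit_sign i j * bit_sign i k)"
    using j k by (simp add: scalar_prod_def lessThan_atLeast0 g_mat_index)
  also have "\<dots> = (if j = k then 2^(M2 - 1) else 0)"
    using j k by (intro bit_sign_orthogonal) auto
  finally show "(transpose_mat (g_mat M2) * g_mat M2) $$ (j, k)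
      = (real (2^(M2 - 1)) \<cdot>\<^sub>m 1\<^sub>m M2) $$ (j, k)"
    using j k by simp
qed simp_all

lemma eigenvalue_smult_one_mat: "eigenvalue ((c::real) \<cdot>\<^sub>m 1\<^sub>m n) l \<Longrightarrow> l = c"
proof -
  assume "eigenvalue (c \<cdot>\<^sub>m 1\<^sub>m n) l"
  then obtain v where v: "v \<in> carrier_vec n" "v \<noteq> 0\<^sub>v n" "(c \<cdot>\<^sub>m 1\<^sub>m n) *\<^sub>v v = l \<cdot>\<^sub>v v"
    unfolding eigenvalue_def eigenvector_def by auto
  obtain i where i: "i < n" "v $ i \<noteq> 0"
    using v(1,2) by (metis carrier_vecD eq_vecI index_zero_vec(1) index_zero_vec(2))
  have "c * v $ i = l * v $ i"
    using arg_cong[OF v(3), of "\<lambda>w. w $ i"] v(1) i(1) by simp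
  thus ?thesis using i(2) by simp
qed

lemma singular_values_g_mat:
  assumes "M2 \<ge> 1" "\<sigma> \<in> singular_values (g_mat M2)"
  shows "\<sigma> = sqrt (real (2^(M2 - 1)))"
proof -
  have "M2 \<le> 2^(M2 - 1)" using less_exp[of "M2 - 1"] assms(1) by linarith
  hence "dim_col (g_mat M2) \<le> dim_row (g_mat M2)" by simp
  then obtain l where "\<sigma> = sqrt l" "eigenvalue (real (2^(M2 - 1)) \<cdot>\<^sub>m 1\<^sub>m M2) l"
    using assms(2) unfolding singular_values_def transpose_g_mat_mult_g_mat[OF assms(1)] by auto
  thus ?thesis using eigenvalue_smult_one_mat by simp
qed

section \<open>Hermitian matrices with spectrum in the unit disc are contractions\<close>

definition cinner :: "complex vec \<Rightarrow> complex vec \<Rightarrow> complex" where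
  "cinner x y = (\<Sum>i<dim_vec x. cnj (x $ i) * y $ i)"

definition vec_sqnorm :: "complex vec \<Rightarrow> real" where
  "vec_sqnorm x = (\<Sum>i<dim_vec x. (cmod (x $ i))^2)"

lemma cinner_hermitian:
  assumes A: "A \<in> carrier_mat n n" and h: "adj A = A"
    and x: "x \<in> carrier_vec n" and y: "y \<in> carrier_vec n"
  shows "cinner x (A *\<^sub>v y) = cinner (A *\<^sub>v x) y"
proof -
  have "cinner x (A *\<^sub>v y) = (\<Sum>i<n. \<Sum>j<n. cnj (x $ i) * A $$ (i, j) * y $ j)"
    using A x y by (simp add: cinner_def mult_mat_vec_index_sum sum_distrib_left mult.assoc
        del: index_mult_mat_vec)
  also have "\<dots> = (\<Sum>j<n. \<Sum>i<n. cnj (A $$ (j, i)) * cnj (x $ i) * y $ j)"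
    by (subst sum.swap) (intro sum.cong refl, simp add: adj_self_index[OF h A])
  also have "\<dots> = cinner (A *\<^sub>v x) y"
    unfolding cinner_def using A x
    by (intro sum.cong) (simp_all add: mult_mat_vec_index_sum cnj_sum sum_distrib_right
        del: index_mult_mat_vec)
  finally show ?thesis .
qed

lemma cinner_self: "cinner x x = of_real (vec_sqnorm x)"
  unfolding cinner_def vec_sqnorm_def of_real_sum
  by (intro sum.cong refl) (simp only: complex_norm_square mult.commute)

lemma vec_sqnorm_nonneg: "vec_sqnorm x \<ge> 0"
  by (simp add: vec_sqnorm_def sum_nonneg)

lemma norm_cinner_le:
  assumes "dim_vec y = dim_vec x"
  shows "cmod (cinner x y) \<le> sqrt (vec_sqnorm x) * sqrt (vec_sqnorm y)"
proof -
  have "cmod (cinner x y) \<le> (\<Sum>i<dim_vec x. \<bar>cmod (x $ i)\<bar> * \<bar>cmod (y $ i)\<bar>)"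
    unfolding cinner_def by (rule order_trans[OF norm_sum]) (simp add: norm_mult)
  also have "\<dots> \<le> L2_set (\<lambda>i. cmod (x $ i)) {..<dim_vec x} * L2_set (\<lambda>i. cmod (y $ i)) {..<dim_vec x}"
    by (rule L2_set_mult_ineq)
  also have "\<dots> = sqrt (vec_sqnorm x) * sqrt (vec_sqnorm y)"
    using assms by (simp add: L2_set_def vec_sqnorm_def)
  finally show ?thesis .
qed

lemma vec_sqnorm_eq_0: "vec_sqnorm v = 0 \<Longrightarrow> v \<in> carrier_vec n \<Longrightarrow> v = 0\<^sub>v n"
  unfolding vec_sqnorm_def by (intro eq_vecI) (auto simp: sum_nonneg_eq_0_iff)

lemma pow_mat_Suc_mult_vec:
  assumes A: "A \<in> carrier_mat n n" and v: "v \<in> carrier_vec n"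
  shows "A ^\<^sub>m Suc k *\<^sub>v v = A *\<^sub>v (A ^\<^sub>m k *\<^sub>v v)"
proof -
  have "A ^\<^sub>m k * A = A * A ^\<^sub>m k"
  proof (induction k)
    case (Suc k)
    have "A ^\<^sub>m Suc k * A = (A * A ^\<^sub>m k) * A" using Suc by simp
    also have "\<dots> = A * A ^\<^sub>m Suc k" using A by (simp add: assoc_mult_mat[of _ n n _ n _ n])
    finally show ?case .
  qed (use A in simp)
  thus ?thesis using A v by (simp add: assoc_mult_mat_vec[of _ n n _ n])
qed

lemma hermitian_pow_mult_vec_log_convex:
  assumes A: "A \<in> carrier_mat n n" and h: "adj A = A" and v: "v \<in> carrier_vec n"
  shows "vec_sqnorm (A ^\<^sub>m Suc k *\<^sub>v v)
    \<le> sqrt (vec_sqnorm (A ^\<^sub>m k *\<^sub>v v)) * sqrt (vec_sqnorm (A ^\<^sub>m Suc (Suc k) *\<^sub>v v))"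
proof -
  define w where "w k = A ^\<^sub>m k *\<^sub>v v" for k
  have w: "w k \<in> carrier_vec n" for k
    unfolding w_def by (rule mult_mat_vec_carrier[OF pow_carrier_mat[OF A] v])
  have wS: "w (Suc k) = A *\<^sub>v w k" for k unfolding w_def by (rule pow_mat_Suc_mult_vec[OF A v])
  have "vec_sqnorm (w (Suc k)) = Re (cinner (w (Suc k)) (w (Suc k)))"
    by (simp add: cinner_self)
  also have "cinner (w (Suc k)) (w (Suc k)) = cinner (w k) (w (Suc (Suc k)))"
  proof -
    have "cinner (w (Suc k)) (w (Suc k)) = cinner (A *\<^sub>v w k) (w (Suc k))"
      by (simp only: wS)
    also have "\<dots> = cinner (w k) (A *\<^sub>v w (Suc k))"
      by (rule cinner_hermitian[OF A h w w, symmetric])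
    finally show ?thesis by (simp only: wS)
  qed
  also have "Re \<dots> \<le> cmod \<dots>" by (rule complex_Re_le_cmod)
  also have "\<dots> \<le> sqrt (vec_sqnorm (w k)) * sqrt (vec_sqnorm (w (Suc (Suc k))))"
    by (rule norm_cinner_le) (metis carrier_vecD w)
  finally show ?thesis unfolding w_def .
qed

lemma log_convex_geometric_growth:
  fixes N :: "nat \<Rightarrow> real"
  assumes log_convex: "\<And>k. N (Suc k)^2 \<le> N k * N (Suc (Suc k))"
    and pos: "0 < N 0" and incr: "N 0 < N 1"
  shows "(N 1 / N 0)^k * N 0 \<le> N k"
proof -
  define r where "r = N 1 / N 0"
  have r: "r > 1" unfolding r_def using pos incr by simp
  have step: "r * N k \<le> N (Suc k) \<and> 0 < N k" for k
  proof (induction k)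
    case 0 thus ?case unfolding r_def using pos by simp
  next
    case (Suc k)
    hence a: "r * N k \<le> N (Suc k)" and b: "N k > 0" by auto
    have c: "N (Suc k) > 0" using a b r by (smt (verit) mult_pos_pos)
    have "N k * (r * N (Suc k)) \<le> N (Suc k) * N (Suc k)" using a c by (simp add: ac_simps)
    also have "\<dots> \<le> N k * N (Suc (Suc k))" using log_convex[of k] by (simp add: power2_eq_square)
    finally have "r * N (Suc k) \<le> N (Suc (Suc k))" using b by simp
    thus ?case using c by simp
  qed
  show ?thesis unfolding r_def[symmetric]
  proof (induction k)
    case (Suc k)
    have "r ^ Suc k * N 0 \<le> r * N k" using Suc r by simp
    also have "\<dots> \<le> N (Suc k)" using step[of k] by simp
    finally show ?case .
  qed simp
qed

lemma spectral_radius_le_1_pow_mult_vec_bound: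
  assumes A: "A \<in> carrier_mat n n" and sr: "spectral_radius A \<le> 1" and v: "v \<in> carrier_vec n"
  obtains c1 c2 where "\<And>k. sqrt (vec_sqnorm (A ^\<^sub>m k *\<^sub>v v))
    \<le> real n * ((c1 + c2 * real k ^ (n - 1)) * (\<Sum>j<n. cmod (v $ j)))"
proof -
  obtain c1 c2 where bnd: "\<And>k. norm_bound (A ^\<^sub>m k) (c1 + c2 * of_nat k ^ (n - 1))"
    using spectral_radius_jnf_norm_bound_le_1_upper_triangular[OF A sr] by blast
  define S where "S = (\<Sum>j<n. cmod (v $ j))"
  have "sqrt (vec_sqnorm (A ^\<^sub>m k *\<^sub>v v)) \<le> real n * ((c1 + c2 * real k ^ (n - 1)) * S)" for k
  proof -
    let ?c = "c1 + c2 * real k ^ (n - 1)"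
    have Ak: "A ^\<^sub>m k \<in> carrier_mat n n" using A by simp
    have Akv: "A ^\<^sub>m k *\<^sub>v v \<in> carrier_vec n" by (rule mult_mat_vec_carrier[OF Ak v])
    have entry: "cmod ((A ^\<^sub>m k *\<^sub>v v) $ i) \<le> ?c * S" if i: "i < n" for i
    proof -
      have "cmod ((A ^\<^sub>m k *\<^sub>v v) $ i) \<le> (\<Sum>j<n. cmod ((A ^\<^sub>m k) $$ (i, j)) * cmod (v $ j))"
        unfolding mult_mat_vec_index_sum[OF Ak v i] norm_mult[symmetric] by (rule norm_sum)
      also have "\<dots> \<le> (\<Sum>j<n. ?c * cmod (v $ j))"
        using bnd[of k] A i unfolding norm_bound_def
        by (intro sum_mono mult_right_mono) (auto split: if_splits)
      finally show ?thesis by (simp add: S_def sum_distrib_left)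
    qed
    have "sqrt (vec_sqnorm (A ^\<^sub>m k *\<^sub>v v)) = L2_set (\<lambda>i. cmod ((A ^\<^sub>m k *\<^sub>v v) $ i)) {..<n}"
      unfolding vec_sqnorm_def L2_set_def using Akv A by (simp del: index_mult_mat_vec)
    also have "\<dots> \<le> (\<Sum>i<n. \<bar>cmod ((A ^\<^sub>m k *\<^sub>v v) $ i)\<bar>)" by (rule L2_set_le_sum_abs)
    also have "\<dots> \<le> (\<Sum>i<n. ?c * S)" using entry by (intro sum_mono) simp
    finally show ?thesis by simp
  qed
  thus ?thesis using that unfolding S_def by blast
qed

text \<open>
  If \<open>\<parallel>A v\<parallel> > \<parallel>v\<parallel>\<close>, log-convexity makes \<open>\<parallel>A\<^sup>k v\<parallel>\<close> grow geometrically, while a spectral radius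
  at most 1 bounds it polynomially.
\<close>
lemma hermitian_contraction:
  assumes A: "A \<in> carrier_mat n n" and h: "adj A = A"
    and ev: "\<And>l. eigenvalue A l \<Longrightarrow> cmod l \<le> 1"
    and v: "v \<in> carrier_vec n"
  shows "vec_sqnorm (A *\<^sub>v v) \<le> vec_sqnorm v"
proof (rule ccontr)
  assume "\<not> ?thesis"
  hence gt: "vec_sqnorm v < vec_sqnorm (A *\<^sub>v v)" by simp
  define N where "N k = sqrt (vec_sqnorm (A ^\<^sub>m k *\<^sub>v v))" for k
  have N0_eq: "N 0 = sqrt (vec_sqnorm v)" unfolding N_def using A v by simp
  have N01: "N 0 < N 1" unfolding N0_eq using gt A v by (simp add: N_def)
  have n: "n > 0" using gt A v by (cases n) (auto simp: vec_sqnorm_def)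
  have N0: "N 0 > 0"
  proof (rule ccontr)
    assume "\<not> N 0 > 0"
    hence "v = 0\<^sub>v n" using v vec_sqnorm_eq_0 vec_sqnorm_nonneg[of v] by (simp add: N0_eq)
    thus False using N01 A unfolding N_def by (simp add: vec_sqnorm_def)
  qed
  have "spectral_radius A \<le> 1"
    using spectral_radius_mem_max(1)[OF A n] ev by (auto simp: spectrum_def)
  then obtain c1 c2 where upper: "\<And>k. N k \<le> real n * ((c1 + c2 * real k ^ (n - 1)) * (\<Sum>j<n. cmod (v $ j)))"
    unfolding N_def using spectral_radius_le_1_pow_mult_vec_bound[OF A _ v] by blast
  have lower: "(N 1 / N 0)^k * N 0 \<le> N k" for k
  proof (rule log_convex_geometric_growth[OF _ N0 N01])
    show "N (Suc k)^2 \<le> N k * N (Suc (Suc k))" for k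
      unfolding N_def using hermitian_pow_mult_vec_log_convex[OF A h v, of k]
      by (simp add: vec_sqnorm_nonneg)
  qed
  define r where "r = N 1 / N 0"
  define S where "S = (\<Sum>j<n. cmod (v $ j))"
  have r: "r > 1" unfolding r_def using N0 N01 by simp
  have "(\<lambda>k. real n * ((c1 + c2 * real k ^ (n - 1)) * S) / r ^ k) \<longlonglongrightarrow> 0"
    using r by real_asymp
  from order_tendstoD(2)[OF this N0] obtain k where
    "real n * ((c1 + c2 * real k ^ (n - 1)) * S) / r ^ k < N 0"
    by (auto simp: eventually_sequentially)
  thus False using lower[of k, folded r_def] upper[of k, folded S_def] r by (simp add: field_simps)
qed

lemma observable_contraction:
  assumes "observable d A"
  shows "(\<Sum>i<d. (cmod (\<Sum>i'<d. A $$ (i, i') * x i'))^2) \<le> (\<Sum>i<d. (cmod (x i))^2)"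
proof -
  have A: "A \<in> carrier_mat d d" and h: "adj A = A"
    using assms unfolding observable_def hermitian_def by auto
  have ev: "cmod l \<le> 1" if "eigenvalue A l" for l
  proof -
    have "l \<in> \<real>" "-1 \<le> Re l" "Re l \<le> 1" using assms that unfolding observable_def by auto
    thus ?thesis by (auto elim: Reals_cases)
  qed
  have "vec_sqnorm (A *\<^sub>v vec d x) \<le> vec_sqnorm (vec d x)"
    using hermitian_contraction[OF A h ev, of "vec d x"] by simp
  moreover have "(A *\<^sub>v vec d x) $ i = (\<Sum>i'<d. A $$ (i, i') * x i')" if "i < d" for i
    using mult_mat_vec_index_sum[OF A _ that, of "vec d x"] by simp
  ultimately show ?thesis using A by (simp add: vec_sqnorm_def)
qed

section \<open>Gram decomposition of positive semidefinite forms\<close>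

definition unit_fun :: "nat \<Rightarrow> nat \<Rightarrow> complex" where
  "unit_fun k i = (if i = k then 1 else 0)"

definition qform :: "(nat \<Rightarrow> nat \<Rightarrow> complex) \<Rightarrow> nat \<Rightarrow> (nat \<Rightarrow> complex) \<Rightarrow> complex" where
  "qform P n x = (\<Sum>a<n. \<Sum>b<n. cnj (x a) * P a b * x b)"

definition hermitian_form :: "(nat \<Rightarrow> nat \<Rightarrow> complex) \<Rightarrow> nat \<Rightarrow> bool" where
  "hermitian_form P n \<longleftrightarrow> (\<forall>a<n. \<forall>b<n. P a b = cnj (P b a))"

definition psd_form :: "(nat \<Rightarrow> nat \<Rightarrow> complex) \<Rightarrow> nat \<Rightarrow> bool" where
  "psd_form P n \<longleftrightarrow> (\<forall>x. 0 \<le> Re (qform P n x))"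

lemma cnj_unit_fun [simp]: "cnj (unit_fun k i) = unit_fun k i"
  by (simp add: unit_fun_def)

lemma sum_mult_unit_fun: "k < n \<Longrightarrow> (\<Sum>b<n. f b * unit_fun k b) = f k"
  by (simp add: unit_fun_def if_distrib sum.delta' cong: if_cong)

lemma sum_unit_fun_mult: "k < n \<Longrightarrow> (\<Sum>b<n. unit_fun k b * f b) = f k"
  using sum_mult_unit_fun[of k n f] by (simp add: mult.commute)

lemma qform_add_unit_fun:
  assumes k: "k < n"
  shows "qform P n (\<lambda>i. v i + t * unit_fun k i) = qform P n v + t * (\<Sum>a<n. cnj (v a) * P a k)
     + cnj t * (\<Sum>b<n. P k b * v b) + cnj t * t * P k k"
proof -
  have "qform P n (\<lambda>i. v i + t * unit_fun k i) = (\<Sum>a<n. \<Sum>b<n. cnj (v a) * P a b * v b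
      + t * (cnj (v a) * P a b * unit_fun k b) + cnj t * (unit_fun k a * (P a b * v b))
      + cnj t * t * (unit_fun k a * (P a b * unit_fun k b)))"
    unfolding qform_def by (intro sum.cong refl) (simp add: unit_fun_def algebra_simps)
  also have "\<dots> = qform P n v + t * (\<Sum>a<n. \<Sum>b<n. cnj (v a) * P a b * unit_fun k b)
      + cnj t * (\<Sum>a<n. unit_fun k a * (\<Sum>b<n. P a b * v b))
      + cnj t * t * (\<Sum>a<n. unit_fun k a * (\<Sum>b<n. P a b * unit_fun k b))"
    unfolding qform_def by (simp add: sum.distrib sum_distrib_left)
  also have "\<dots> = qform P n v + t * (\<Sum>a<n. cnj (v a) * P a k)
      + cnj t * (\<Sum>b<n. P k b * v b) + cnj t * t * P k k"
    using k by (simp add: sum_mult_unit_fun sum_unit_fun_mult)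
  finally show ?thesis .
qed

lemma qform_unit_fun: "k < n \<Longrightarrow> qform P n (unit_fun k) = P k k"
  using qform_add_unit_fun[of k n P "\<lambda>_. 0" 1] by (simp add: qform_def)

lemma psd_form_diag_nonneg: "psd_form P n \<Longrightarrow> k < n \<Longrightarrow> 0 \<le> Re (P k k)"
  using qform_unit_fun[of k n P] unfolding psd_form_def by metis

lemma hermitian_form_diag_real:
  assumes "hermitian_form P n" "k < n"
  shows "P k k = of_real (Re (P k k))"
proof -
  have "P k k = cnj (P k k)" using assms unfolding hermitian_form_def by blast
  hence "Im (P k k) = 0" by (metis cnj.simps(2) neg_equal_zero)
  thus ?thesis by (simp add: complex_eqI)
qed

lemma psd_form_zero_diag:
  assumes h: "hermitian_form P n" and ps: "psd_form P n" and k: "k < n" and a: "a < n"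
    and zero: "P k k = 0"
  shows "P a k = 0"
proof (rule ccontr)
  assume nz: "P a k \<noteq> 0"
  define z where "z = P a k"
  have zk: "P k a = cnj z" using h k a unfolding hermitian_form_def z_def by blast
  \<comment> \<open>moving along \<open>e\<^sub>a - s (cnj z) e\<^sub>k\<close> with \<open>s\<close> large makes the form negative\<close>
  define s where "s = (Re (P a a) + 1) / (cmod z)^2"
  have "(cmod z)^2 > 0" using nz z_def by simp
  hence sz: "s * (cmod z)^2 = Re (P a a) + 1" unfolding s_def by simp
  define t where "t = - (of_real s * cnj z)"
  have "(\<Sum>i<n. cnj (unit_fun a i) * P i k) = z"
    using sum_unit_fun_mult[OF a, of "\<lambda>i. P i k"] z_def by simp
  moreover have "(\<Sum>b<n. P k b * unit_fun a b) = cnj z" using sum_mult_unit_fun[OF a] zk by simp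
  ultimately have "qform P n (\<lambda>i. unit_fun a i + t * unit_fun k i) = P a a + t * z + cnj t * cnj z"
    using qform_add_unit_fun[OF k, of P "unit_fun a" t] zero qform_unit_fun[OF a] by simp
  also have "\<dots> = P a a - 2 * of_real (s * (cmod z)^2)"
    unfolding t_def of_real_mult complex_norm_square by (simp add: algebra_simps)
  finally have "Re (qform P n (\<lambda>i. unit_fun a i + t * unit_fun k i)) = - Re (P a a) - 2"
    using sz by simp
  also have "\<dots> < 0" using psd_form_diag_nonneg[OF ps a] by simp
  finally show False using ps unfolding psd_form_def by (meson not_less)
qed

lemma qform_complete_square:
  fixes x :: "nat \<Rightarrow> complex"
  assumes h: "hermitian_form P n" and k: "k < n" and pk: "P k k = of_real p" and p: "p > 0"
  defines "C \<equiv> \<Sum>a<n. cnj (x a) * P a k"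
  shows "qform P n (\<lambda>i. x i - cnj C / of_real p * unit_fun k i) = qform P n x - C * cnj C / of_real p"
proof -
  have "(\<Sum>b<n. P k b * x b) = (\<Sum>b<n. cnj (cnj (x b) * P b k))"
  proof (rule sum.cong[OF refl])
    fix b assume "b \<in> {..<n}"
    hence "P k b = cnj (P b k)" using h k unfolding hermitian_form_def by blast
    thus "P k b * x b = cnj (cnj (x b) * P b k)" by simp
  qed
  hence cC: "(\<Sum>b<n. P k b * x b) = cnj C" unfolding C_def by (simp add: cnj_sum)
  define t where "t = - cnj C / of_real p"
  have "qform P n (\<lambda>i. x i + t * unit_fun k i)
      = qform P n x + (t * C + cnj t * cnj C + cnj t * t * of_real p)"
    using qform_add_unit_fun[OF k, of P x t] cC pk by (simp add: C_def add.assoc)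
  also have "t * C + cnj t * cnj C + cnj t * t * of_real p = - C * cnj C / of_real p"
    unfolding t_def using p by (simp add: field_simps)
  also have "(\<lambda>i. x i + t * unit_fun k i) = (\<lambda>i. x i - cnj C / of_real p * unit_fun k i)"
    unfolding t_def by simp
  finally show ?thesis by simp
qed

text \<open>Subtracting the rank-one form through column \<open>k\<close> (a Schur complement) keeps the form
  positive semidefinite and clears row and column \<open>k\<close>.\<close>
lemma psd_form_deflate:
  assumes h: "hermitian_form P n" and ps: "psd_form P n" and k: "k < n" and pos: "Re (P k k) > 0"
  defines "c \<equiv> \<lambda>a. P a k / of_real (sqrt (Re (P k k)))"
  shows "hermitian_form (\<lambda>a b. P a b - c a * cnj (c b)) n"
    and "psd_form (\<lambda>a b. P a b - c a * cnj (c b)) n"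
    and "\<And>b. b < n \<Longrightarrow> c k * cnj (c b) = P k b"
proof -
  have herm: "P a b = cnj (P b a)" if "a < n" "b < n" for a b
    using h that unfolding hermitian_form_def by blast
  define p where "p = Re (P k k)"
  define q where "q = sqrt p"
  have pk: "P k k = of_real p" unfolding p_def by (rule hermitian_form_diag_real[OF h k])
  have ppos: "p > 0" unfolding p_def by (rule pos)
  have qp: "q > 0" "of_real q * of_real q = (of_real p :: complex)"
    unfolding q_def p_def using pos by (simp_all flip: of_real_mult)
  have cq: "c a = P a k / of_real q" for a unfolding c_def q_def p_def by simp
  show "c k * cnj (c b) = P k b" if "b < n" for b
  proof -
    have "cnj (P b k) = P k b" using herm[OF k that] by simp
    hence "c k * cnj (c b) = of_real p * P k b / (of_real q * of_real q)"
      unfolding cq pk by simp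
    thus ?thesis using qp ppos by simp
  qed
  show "hermitian_form (\<lambda>a b. P a b - c a * cnj (c b)) n"
    unfolding hermitian_form_def by (metis herm complex_cnj_diff complex_cnj_mult complex_cnj_cnj mult.commute)
  show "psd_form (\<lambda>a b. P a b - c a * cnj (c b)) n" unfolding psd_form_def
  proof
    fix x
    define C where "C = (\<Sum>a<n. cnj (x a) * P a k)"
    have s1: "(\<Sum>a<n. cnj (x a) * c a) = C / of_real q"
      unfolding C_def cq by (simp add: sum_divide_distrib)
    have s2: "(\<Sum>b<n. cnj (c b) * x b) = cnj C / of_real q"
    proof -
      have "(\<Sum>b<n. cnj (c b) * x b) = cnj (\<Sum>b<n. cnj (x b) * c b)"
        by (simp add: cnj_sum mult.commute)
      thus ?thesis using s1 by simp
    qed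
    have "qform (\<lambda>a b. P a b - c a * cnj (c b)) n x
        = qform P n x - (\<Sum>a<n. cnj (x a) * c a) * (\<Sum>b<n. cnj (c b) * x b)"
      unfolding qform_def sum_product by (simp add: algebra_simps sum_subtractf)
    also have "\<dots> = qform P n x - C * cnj C / of_real p"
      using s1 s2 qp by simp
    also have "\<dots> = qform P n (\<lambda>i. x i - cnj C / of_real p * unit_fun k i)"
      unfolding C_def by (rule qform_complete_square[OF h k pk ppos, symmetric])
    finally show "0 \<le> Re (qform (\<lambda>a b. P a b - c a * cnj (c b)) n x)"
      using ps unfolding psd_form_def by simp
  qed
qed

lemma hermitian_form_clear_index:
  assumes h: "hermitian_form Q n" and supp: "\<forall>a<n. \<forall>b<n. (Suc k \<le> a \<or> Suc k \<le> b) \<longrightarrow> Q a b = 0"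
    and row: "\<And>b. b < n \<Longrightarrow> Q k b = 0"
  shows "\<forall>a<n. \<forall>b<n. (k \<le> a \<or> k \<le> b) \<longrightarrow> Q a b = 0"
proof (intro allI impI)
  fix a b assume ab: "a < n" "b < n" and "k \<le> a \<or> k \<le> b"
  then consider "a = k" | "b = k" | "Suc k \<le> a \<or> Suc k \<le> b" by linarith
  thus "Q a b = 0"
  proof cases
    case 2
    hence "Q a b = cnj (Q k a)" using h ab unfolding hermitian_form_def by blast
    thus ?thesis using row[OF ab(1)] by simp
  qed (use row ab supp in auto)
qed

text \<open>Cholesky elimination of the indices \<open>k - 1, \<dots>, 0\<close>.\<close>
lemma psd_form_gram_aux:
  "k \<le> n \<Longrightarrow> hermitian_form P n \<Longrightarrow> psd_form P n \<Longrightarrow>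
   (\<forall>a<n. \<forall>b<n. (k \<le> a \<or> k \<le> b) \<longrightarrow> P a b = 0) \<Longrightarrow>
   \<exists>r. \<forall>a<n. \<forall>b<n. P a b = (\<Sum>m<k. r m a * cnj (r m b))"
proof (induction k arbitrary: P)
  case 0 thus ?case by auto
next
  case (Suc k)
  note h = Suc.prems(2) and ps = Suc.prems(3) and supp = Suc.prems(4)
  have k: "k < n" using Suc.prems(1) by simp
  show ?case
  proof (cases "Re (P k k) = 0")
    case True
    have "P k b = 0" if "b < n" for b
    proof -
      have "P b k = 0"
        using psd_form_zero_diag[OF h ps k that] hermitian_form_diag_real[OF h k] True by simp
      moreover have "P k b = cnj (P b k)" using h k that unfolding hermitian_form_def by blast
      ultimately show ?thesis by simp
    qed
    then obtain r where "\<forall>a<n. \<forall>b<n. P a b = (\<Sum>m<k. r m a * cnj (r m b))"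
      using Suc.IH[OF _ h ps hermitian_form_clear_index[OF h supp]] k by auto
    thus ?thesis by (intro exI[of _ "r(k := (\<lambda>_. 0))"]) simp
  next
    case False
    hence pos: "Re (P k k) > 0" using psd_form_diag_nonneg[OF ps k] by simp
    define c where "c a = P a k / of_real (sqrt (Re (P k k)))" for a
    note deflate = psd_form_deflate[OF h ps k pos, folded c_def]
    have "\<forall>a<n. \<forall>b<n. (Suc k \<le> a \<or> Suc k \<le> b) \<longrightarrow> P a b - c a * cnj (c b) = 0"
      using supp k by (auto simp: c_def)
    then obtain r where r: "\<forall>a<n. \<forall>b<n. P a b - c a * cnj (c b) = (\<Sum>m<k. r m a * cnj (r m b))"
      using Suc.IH[OF _ deflate(1,2) hermitian_form_clear_index[OF deflate(1)]] k deflate(3) by auto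
    show ?thesis
      by (intro exI[of _ "r(k := c)"] allI impI) (simp add: r[rule_format, symmetric])
  qed
qed

lemma psd_form_gram:
  "hermitian_form P n \<Longrightarrow> psd_form P n \<Longrightarrow> \<exists>r. \<forall>a<n. \<forall>b<n. P a b = (\<Sum>m<n. r m a * cnj (r m b))"
  using psd_form_gram_aux[of n n P] by auto

lemma density_op_pure_decomp:
  assumes "density_op N \<rho>"
  obtains r where "\<And>K. K \<in> carrier_mat N N \<Longrightarrow> mtrace (\<rho> * K) = (\<Sum>m<N. qform (\<lambda>a b. K $$ (a, b)) N (r m))"
    and "(\<Sum>m<N. \<Sum>a<N. (cmod (r m a))^2) = 1"
proof -
  have \<rho>: "\<rho> \<in> carrier_mat N N" and h: "adj \<rho> = \<rho>" and tr: "mtrace \<rho> = 1"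
    and ps: "\<And>v. v \<in> carrier_vec N \<Longrightarrow> 0 \<le> Re (conjugate v \<bullet> (\<rho> *\<^sub>v v))"
    using assms unfolding density_op_def hermitian_def by auto
  define P where "P a b = \<rho> $$ (a, b)" for a b
  have "hermitian_form P N"
    unfolding hermitian_form_def P_def using adj_self_index[OF h \<rho>] by simp
  moreover have "psd_form P N" unfolding psd_form_def
  proof
    fix x :: "nat \<Rightarrow> complex"
    have "conjugate (vec N x) \<bullet> (\<rho> *\<^sub>v vec N x) = qform P N x"
      using \<rho> by (simp add: scalar_prod_def lessThan_atLeast0 qform_def P_def mult_mat_vec_index_sum
          sum_distrib_left mult.assoc del: index_mult_mat_vec)
    thus "0 \<le> Re (qform P N x)" using ps[of "vec N x"] by simp
  qed
  ultimately obtain r where r: "\<And>a b. a < N \<Longrightarrow> b < N \<Longrightarrow> P a b = (\<Sum>m<N. r m a * cnj (r m b))"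
    using psd_form_gram by blast
  have "mtrace (\<rho> * K) = (\<Sum>m<N. qform (\<lambda>a b. K $$ (a, b)) N (r m))" if K: "K \<in> carrier_mat N N" for K
  proof -
    have "mtrace (\<rho> * K) = (\<Sum>a<N. \<Sum>b<N. \<Sum>m<N. cnj (r m b) * K $$ (b, a) * r m a)"
      unfolding mtrace_mult[OF \<rho> K] P_def[symmetric]
      by (intro sum.cong refl) (simp add: r sum_distrib_left ac_simps)
    also have "\<dots> = (\<Sum>m<N. \<Sum>b<N. \<Sum>a<N. cnj (r m b) * K $$ (b, a) * r m a)"
      by (rule sum_reverse3)
    finally show ?thesis unfolding qform_def by simp
  qed
  moreover have "(\<Sum>m<N. \<Sum>a<N. (cmod (r m a))^2) = 1"
  proof -
    have "complex_of_real (\<Sum>m<N. \<Sum>a<N. (cmod (r m a))^2) = (\<Sum>a<N. \<Sum>m<N. r m a * cnj (r m a))"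
      unfolding of_real_sum by (subst sum.swap) (simp only: complex_norm_square)
    also have "\<dots> = mtrace \<rho>" unfolding mtrace_def using \<rho> r P_def by simp
    finally show ?thesis using tr by (simp only: of_real_eq_1_iff)
  qed
  ultimately show ?thesis using that by blast
qed

section \<open>Kronecker products\<close>

lemma kron_carrier: "A \<in> carrier_mat a a \<Longrightarrow> B \<in> carrier_mat b b \<Longrightarrow> kron A B \<in> carrier_mat (a * b) (a * b)"
  unfolding kron_def by auto

lemma kron_index:
  "A \<in> carrier_mat a a \<Longrightarrow> B \<in> carrier_mat b b \<Longrightarrow> p < a * b \<Longrightarrow> q < a * b \<Longrightarrow>
    kron A B $$ (p, q) = A $$ (p div b, q div b) * B $$ (p mod b, q mod b)"
  unfolding kron_def by auto

lemma div_mod_less_mult: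
  fixes p a b :: nat
  assumes "p < a * b"
  shows "p div b < a" and "p mod b < b"
proof -
  show "p div b < a" using assms by (simp add: less_mult_imp_div_less mult.commute)
  have "b > 0" using assms by (cases b) auto
  thus "p mod b < b" by simp
qed

lemma mult_add_less_mult: "i < d1 \<Longrightarrow> j < d2 \<Longrightarrow> i * d2 + j < d1 * d2"
  for i j d1 d2 :: nat
proof -
  assume "i < d1" "j < d2"
  hence "i * d2 + j < Suc i * d2" by simp
  also have "\<dots> \<le> d1 * d2" using \<open>i < d1\<close> by (intro mult_right_mono) auto
  finally show ?thesis .
qed

lemma kron_index_mult_add:
  "A \<in> carrier_mat d1 d1 \<Longrightarrow> B \<in> carrier_mat d2 d2 \<Longrightarrow> i < d1 \<Longrightarrow> j < d2 \<Longrightarrow> i' < d1 \<Longrightarrow> j' < d2 \<Longrightarrow>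
    kron A B $$ (i * d2 + j, i' * d2 + j') = A $$ (i, i') * B $$ (j, j')"
  using mult_add_less_mult[of i d1 j d2] mult_add_less_mult[of i' d1 j' d2] by (simp add: kron_index)

lemma qform_kron:
  assumes A: "A \<in> carrier_mat d1 d1" and B: "B \<in> carrier_mat d2 d2"
  shows "qform (\<lambda>a b. kron A B $$ (a, b)) (d1 * d2) x =
    (\<Sum>i<d1. \<Sum>j<d2. \<Sum>i'<d1. \<Sum>j'<d2. cnj (x (i * d2 + j)) * (A $$ (i, i') * B $$ (j, j')) * x (i' * d2 + j'))"
  unfolding qform_def sum_lessThan_mult by (intro sum.cong refl) (simp add: kron_index_mult_add[OF A B])

lemma kron_mult:
  assumes A: "A \<in> carrier_mat a a" and C: "C \<in> carrier_mat a a"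
    and B: "B \<in> carrier_mat b b" and D: "D \<in> carrier_mat b b"
  shows "kron A B * kron C D = kron (A * C) (B * D)"
proof (rule eq_matI)
  have AB: "kron A B \<in> carrier_mat (a * b) (a * b)" by (rule kron_carrier[OF A B])
  have CD: "kron C D \<in> carrier_mat (a * b) (a * b)" by (rule kron_carrier[OF C D])
  have AC: "A * C \<in> carrier_mat a a" and BD: "B * D \<in> carrier_mat b b" using A B C D by auto
  have ACBD: "kron (A * C) (B * D) \<in> carrier_mat (a * b) (a * b)" by (rule kron_carrier[OF AC BD])
  show "dim_row (kron A B * kron C D) = dim_row (kron (A * C) (B * D))"
    and "dim_col (kron A B * kron C D) = dim_col (kron (A * C) (B * D))" using AB CD ACBD by auto
  fix p q assume "p < dim_row (kron (A * C) (B * D))" "q < dim_col (kron (A * C) (B * D))"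
  hence p: "p < a * b" and q: "q < a * b" using ACBD by auto
  note pd = div_mod_less_mult[OF p] and qd = div_mod_less_mult[OF q]
  have "(kron A B * kron C D) $$ (p, q) = (\<Sum>k<a. \<Sum>l<b. kron A B $$ (p, k * b + l) * kron C D $$ (k * b + l, q))"
    unfolding mult_mat_index_sum[OF AB CD p q] by (rule sum_lessThan_mult)
  also have "\<dots> = (\<Sum>k<a. A $$ (p div b, k) * C $$ (k, q div b)) * (\<Sum>l<b. B $$ (p mod b, l) * D $$ (l, q mod b))"
    unfolding sum_product
  proof (intro sum.cong refl)
    fix k l assume "k \<in> {..<a}" "l \<in> {..<b}"
    hence "k * b + l < a * b" "(k * b + l) div b = k" "(k * b + l) mod b = l"
      using mult_add_less_mult[of k a l b] by auto
    thus "kron A B $$ (p, k * b + l) * kron C D $$ (k * b + l, q) =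
        A $$ (p div b, k) * C $$ (k, q div b) * (B $$ (p mod b, l) * D $$ (l, q mod b))"
      using kron_index[OF A B p] kron_index[OF C D _ q] by (simp add: ac_simps)
  qed
  also have "\<dots> = kron (A * C) (B * D) $$ (p, q)"
    using kron_index[OF AC BD p q] mult_mat_index_sum[OF A C pd(1) qd(1)]
      mult_mat_index_sum[OF B D pd(2) qd(2)] by simp
  finally show "(kron A B * kron C D) $$ (p, q) = kron (A * C) (B * D) $$ (p, q)" .
qed

lemma kron_adj:
  assumes A: "A \<in> carrier_mat a a" and B: "B \<in> carrier_mat b b"
  shows "adj (kron A B) = kron (adj A) (adj B)"
proof -
  have aA: "adj A \<in> carrier_mat a a" and aB: "adj B \<in> carrier_mat b b" using A B by (auto simp: adj_def)
  show ?thesis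
  proof (rule eq_matI)
    fix p q assume "p < dim_row (kron (adj A) (adj B))" "q < dim_col (kron (adj A) (adj B))"
    hence p: "p < a * b" and q: "q < a * b" using kron_carrier[OF aA aB] by auto
    note pd = div_mod_less_mult[OF p] and qd = div_mod_less_mult[OF q]
    have "adj (kron A B) $$ (p, q) = cnj (kron A B $$ (q, p))"
      using kron_carrier[OF A B] p q by (simp add: adj_def)
    also have "\<dots> = cnj (A $$ (q div b, p div b)) * cnj (B $$ (q mod b, p mod b))"
      using kron_index[OF A B q p] by simp
    also have "\<dots> = kron (adj A) (adj B) $$ (p, q)"
      using A B pd qd kron_index[OF aA aB p q] by (simp add: adj_def)
    finally show "adj (kron A B) $$ (p, q) = kron (adj A) (adj B) $$ (p, q)" .
  qed (use kron_carrier[OF A B] kron_carrier[OF aA aB] in \<open>auto simp: adj_def\<close>)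
qed

lemma kron_one: "kron (1\<^sub>m a) (1\<^sub>m b) = 1\<^sub>m (a * b)"
proof (rule eq_matI)
  fix p q assume "p < dim_row (1\<^sub>m (a * b))" "q < dim_col (1\<^sub>m (a * b))"
  hence p: "p < a * b" and q: "q < a * b" by auto
  have "(p div b = q div b \<and> p mod b = q mod b) = (p = q)"
    by (metis div_mult_mod_eq)
  thus "kron (1\<^sub>m a) (1\<^sub>m b) $$ (p, q) = 1\<^sub>m (a * b) $$ (p, q)"
    using kron_index[of "1\<^sub>m a" a "1\<^sub>m b" b p q] p q div_mod_less_mult[OF p] div_mod_less_mult[OF q]
    by auto
qed (auto simp: kron_def)

lemma kron_uminus_left: "A \<in> carrier_mat a a \<Longrightarrow> B \<in> carrier_mat b b \<Longrightarrow> kron (- A) B = - kron A B"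
  by (intro eq_matI) (auto simp: kron_def div_mod_less_mult)

lemma kron_uminus_right: "A \<in> carrier_mat a a \<Longrightarrow> B \<in> carrier_mat b b \<Longrightarrow> kron A (- B) = - kron A B"
  by (intro eq_matI) (auto simp: kron_def div_mod_less_mult)

section \<open>The upper bound\<close>

definition fro_sqnorm :: "nat \<Rightarrow> nat \<Rightarrow> (nat \<Rightarrow> nat \<Rightarrow> complex) \<Rightarrow> real" where
  "fro_sqnorm d1 d2 U = (\<Sum>i<d1. \<Sum>j<d2. (cmod (U i j))^2)"

lemma Re_cnj_mult_le_amgm:
  assumes t: "t > 0"
  shows "Re (cnj u * w) \<le> (t * (cmod u)^2 + (cmod w)^2 / t) / 2"
proof -
  have "Re (cnj u * w) \<le> cmod u * cmod w"
    using complex_Re_le_cmod[of "cnj u * w"] by (simp add: norm_mult)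
  moreover have "0 \<le> (t * cmod u - cmod w)^2 / t" using t by simp
  moreover have "(t * cmod u - cmod w)^2 / t = t * (cmod u)^2 - 2 * cmod u * cmod w + (cmod w)^2 / t"
    using t by (simp add: power2_diff field_simps power2_eq_square)
  ultimately show ?thesis by simp
qed

lemma Re_sum_cnj_mult_le_amgm:
  assumes t: "t > 0"
  shows "Re (\<Sum>i<d1. \<Sum>j<d2. cnj (X i j) * Z i j) \<le> (t * fro_sqnorm d1 d2 X + fro_sqnorm d1 d2 Z / t) / 2"
proof -
  have "Re (\<Sum>i<d1. \<Sum>j<d2. cnj (X i j) * Z i j)
      \<le> (\<Sum>i<d1. \<Sum>j<d2. (t * (cmod (X i j))^2 + (cmod (Z i j))^2 / t) / 2)"
    unfolding Re_sum by (intro sum_mono Re_cnj_mult_le_amgm t)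
  also have "\<dots> = (t * fro_sqnorm d1 d2 X + fro_sqnorm d1 d2 Z / t) / 2"
    unfolding fro_sqnorm_def
    by (simp add: sum.distrib sum_divide_distrib sum_distrib_left add_divide_distrib)
  finally show ?thesis .
qed

lemma sum_sqnorm_orthogonal_combination:
  fixes G :: "'a \<Rightarrow> 'b \<Rightarrow> real" and y :: "'b \<Rightarrow> complex"
  assumes fin: "finite I2"
    and orth: "\<And>x2 x2'. x2 \<in> I2 \<Longrightarrow> x2' \<in> I2 \<Longrightarrow>
      (\<Sum>x1\<in>I1. G x1 x2 * G x1 x2') = (if x2 = x2' then c else 0)"
  shows "(\<Sum>x1\<in>I1. (cmod (\<Sum>x2\<in>I2. of_real (G x1 x2) * y x2))^2) = c * (\<Sum>x2\<in>I2. (cmod (y x2))^2)"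
proof -
  have "complex_of_real (\<Sum>x1\<in>I1. (cmod (\<Sum>x2\<in>I2. of_real (G x1 x2) * y x2))^2)
      = (\<Sum>x1\<in>I1. \<Sum>x2\<in>I2. \<Sum>x2'\<in>I2. of_real (G x1 x2 * G x1 x2') * (y x2 * cnj (y x2')))"
    unfolding of_real_sum complex_norm_square cnj_sum sum_product
    by (intro sum.cong refl) (simp add: ac_simps)
  also have "\<dots> = (\<Sum>x2\<in>I2. \<Sum>x2'\<in>I2. \<Sum>x1\<in>I1. of_real (G x1 x2 * G x1 x2') * (y x2 * cnj (y x2')))"
    by (rule sum_rotate3)
  also have "\<dots> = (\<Sum>x2\<in>I2. \<Sum>x2'\<in>I2. of_real (\<Sum>x1\<in>I1. G x1 x2 * G x1 x2') * (y x2 * cnj (y x2')))"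
    by (simp only: of_real_sum sum_distrib_right)
  also have "\<dots> = (\<Sum>x2\<in>I2. \<Sum>x2'\<in>I2. if x2 = x2' then of_real c * (y x2 * cnj (y x2')) else 0)"
    by (intro sum.cong refl) (simp add: orth)
  also have "\<dots> = (\<Sum>x2\<in>I2. of_real c * (y x2 * cnj (y x2)))"
    using fin by (simp add: sum.delta)
  also have "\<dots> = complex_of_real (c * (\<Sum>x2\<in>I2. (cmod (y x2))^2))"
    unfolding of_real_mult of_real_sum sum_distrib_left complex_norm_square ..
  finally show ?thesis by (simp only: of_real_eq_iff)
qed

lemma sum_fro_sqnorm_orthogonal_combination:
  fixes G :: "'a \<Rightarrow> 'b \<Rightarrow> real" and Y :: "'b \<Rightarrow> nat \<Rightarrow> nat \<Rightarrow> complex"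
  assumes fin: "finite I2"
    and orth: "\<And>x2 x2'. x2 \<in> I2 \<Longrightarrow> x2' \<in> I2 \<Longrightarrow>
      (\<Sum>x1\<in>I1. G x1 x2 * G x1 x2') = (if x2 = x2' then c else 0)"
  shows "(\<Sum>x1\<in>I1. fro_sqnorm d1 d2 (\<lambda>i j. \<Sum>x2\<in>I2. of_real (G x1 x2) * Y x2 i j))
    = c * (\<Sum>x2\<in>I2. fro_sqnorm d1 d2 (Y x2))"
proof -
  have "(\<Sum>x1\<in>I1. fro_sqnorm d1 d2 (\<lambda>i j. \<Sum>x2\<in>I2. of_real (G x1 x2) * Y x2 i j))
      = (\<Sum>i<d1. \<Sum>j<d2. \<Sum>x1\<in>I1. (cmod (\<Sum>x2\<in>I2. of_real (G x1 x2) * Y x2 i j))^2)"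
    unfolding fro_sqnorm_def by (rule sum_rotate3)
  also have "\<dots> = (\<Sum>i<d1. \<Sum>j<d2. c * (\<Sum>x2\<in>I2. (cmod (Y x2 i j))^2))"
    by (intro sum.cong refl) (rule sum_sqnorm_orthogonal_combination[OF fin orth])
  also have "\<dots> = c * (\<Sum>x2\<in>I2. fro_sqnorm d1 d2 (Y x2))"
    unfolding fro_sqnorm_def sum_distrib_left by (rule sum_rotate3[symmetric])
  finally show ?thesis .
qed

text \<open>For Hermitian \<open>A\<close>: \<open>\<langle>R, (A \<otimes> B) R\<rangle> = \<langle>A R, R B\<^sup>T\<rangle>\<close>, viewing \<open>R\<close> as a \<open>d1 \<times> d2\<close> matrix.\<close>
lemma kron_form_eq_inner:
  assumes herm: "\<And>i a. i < d1 \<Longrightarrow> a < d1 \<Longrightarrow> cnj (A $$ (i, a)) = A $$ (a, i)"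
  shows "(\<Sum>i<d1. \<Sum>j<d2. \<Sum>i'<d1. \<Sum>j'<d2. cnj (R i j) * (A $$ (i, i') * B $$ (j, j')) * R i' j')
    = (\<Sum>i<d1. \<Sum>j<d2. cnj (\<Sum>i'<d1. A $$ (i, i') * R i' j) * (\<Sum>j'<d2. B $$ (j, j') * R i j'))"
proof -
  define F where "F a j b = (\<Sum>j'<d2. cnj (R a j) * (A $$ (a, b) * B $$ (j, j')) * R b j')" for a j b
  have "(\<Sum>i<d1. \<Sum>j<d2. \<Sum>i'<d1. \<Sum>j'<d2. cnj (R i j) * (A $$ (i, i') * B $$ (j, j')) * R i' j')
      = (\<Sum>b<d1. \<Sum>j<d2. \<Sum>a<d1. F a j b)"
    unfolding F_def by (rule sum_reverse3)
  also have "\<dots> = (\<Sum>i<d1. \<Sum>j<d2. cnj (\<Sum>i'<d1. A $$ (i, i') * R i' j) * (\<Sum>j'<d2. B $$ (j, j') * R i j'))"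
  proof (intro sum.cong refl)
    fix i j assume i: "i \<in> {..<d1}"
    show "(\<Sum>a<d1. F a j i) = cnj (\<Sum>i'<d1. A $$ (i, i') * R i' j) * (\<Sum>j'<d2. B $$ (j, j') * R i j')"
      unfolding F_def cnj_sum sum_product using herm i by (intro sum.cong refl) (simp add: ac_simps)
  qed
  finally show ?thesis .
qed

lemma weighted_kron_form_eq_inner:
  fixes w :: "'a \<Rightarrow> real" and B :: "'a \<Rightarrow> complex mat"
  assumes herm: "\<And>i a. i < d1 \<Longrightarrow> a < d1 \<Longrightarrow> cnj (A $$ (i, a)) = A $$ (a, i)"
  shows "(\<Sum>x\<in>I. w x * Re (\<Sum>i<d1. \<Sum>j<d2. \<Sum>i'<d1. \<Sum>j'<d2.
      cnj (R i j) * (A $$ (i, i') * B x $$ (j, j')) * R i' j'))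
    = Re (\<Sum>i<d1. \<Sum>j<d2. cnj (\<Sum>i'<d1. A $$ (i, i') * R i' j)
      * (\<Sum>x\<in>I. of_real (w x) * (\<Sum>j'<d2. B x $$ (j, j') * R i j')))"
proof -
  define X where "X i j = (\<Sum>i'<d1. A $$ (i, i') * R i' j)" for i j
  define Y where "Y x i j = (\<Sum>j'<d2. B x $$ (j, j') * R i j')" for x i j
  define T where "T x = (\<Sum>i<d1. \<Sum>j<d2. cnj (X i j) * Y x i j)" for x
  have "(\<Sum>i<d1. \<Sum>j<d2. \<Sum>i'<d1. \<Sum>j'<d2. cnj (R i j) * (A $$ (i, i') * B x $$ (j, j')) * R i' j')
      = T x" for x
    unfolding T_def X_def Y_def by (rule kron_form_eq_inner[OF herm])
  hence "(\<Sum>x\<in>I. w x * Re (\<Sum>i<d1. \<Sum>j<d2. \<Sum>i'<d1. \<Sum>j'<d2.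
      cnj (R i j) * (A $$ (i, i') * B x $$ (j, j')) * R i' j'))
      = Re (\<Sum>x\<in>I. of_real (w x) * T x)"
    by (simp add: Re_sum)
  also have "(\<Sum>x\<in>I. of_real (w x) * T x) = (\<Sum>x\<in>I. \<Sum>i<d1. \<Sum>j<d2. of_real (w x) * (cnj (X i j) * Y x i j))"
    unfolding T_def sum_distrib_left ..
  also have "\<dots> = (\<Sum>i<d1. \<Sum>j<d2. \<Sum>x\<in>I. of_real (w x) * (cnj (X i j) * Y x i j))"
    by (rule sum_rotate3)
  also have "\<dots> = (\<Sum>i<d1. \<Sum>j<d2. cnj (X i j) * (\<Sum>x\<in>I. of_real (w x) * Y x i j))"
    unfolding sum_distrib_left by (simp add: ac_simps)
  finally show ?thesis unfolding X_def Y_def .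
qed

lemma pure_state_value_le:
  fixes A B :: "nat \<Rightarrow> complex mat" and G :: "nat \<Rightarrow> nat \<Rightarrow> real" and R :: "nat \<Rightarrow> nat \<Rightarrow> complex"
  assumes obsA: "\<And>x1. x1 \<in> I1 \<Longrightarrow> observable d1 (A x1)"
    and obsB: "\<And>x2. x2 \<in> I2 \<Longrightarrow> observable d2 (B x2)"
    and fin: "finite I2" and ne: "I2 \<noteq> {}"
    and orth: "\<And>x2 x2'. x2 \<in> I2 \<Longrightarrow> x2' \<in> I2 \<Longrightarrow>
      (\<Sum>x1\<in>I1. G x1 x2 * G x1 x2') = (if x2 = x2' then real (card I1) else 0)"
  shows "(\<Sum>x1\<in>I1. \<Sum>x2\<in>I2. G x1 x2 * Re (\<Sum>i<d1. \<Sum>j<d2. \<Sum>i'<d1. \<Sum>j'<d2.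
            cnj (R i j) * (A x1 $$ (i, i') * B x2 $$ (j, j')) * R i' j'))
     \<le> real (card I1) * sqrt (real (card I2)) * fro_sqnorm d1 d2 R" (is "?value \<le> _")
proof -
  define c1 where "c1 = real (card I1)"
  define c2 where "c2 = real (card I2)"
  define N where "N = fro_sqnorm d1 d2 R"
  define t where "t = sqrt c2"
  have t: "t > 0" and tt: "c2 / t = t" unfolding t_def c2_def using fin ne
    by (simp_all add: card_gt_0_iff real_div_sqrt)
  define X where "X x1 i j = (\<Sum>i'<d1. A x1 $$ (i, i') * R i' j)" for x1 i j
  define Y where "Y x2 i j = (\<Sum>j'<d2. B x2 $$ (j, j') * R i j')" for x2 i j
  define Z where "Z x1 i j = (\<Sum>x2\<in>I2. of_real (G x1 x2) * Y x2 i j)" for x1 i j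
  have inner: "(\<Sum>x2\<in>I2. G x1 x2 * Re (\<Sum>i<d1. \<Sum>j<d2. \<Sum>i'<d1. \<Sum>j'<d2.
            cnj (R i j) * (A x1 $$ (i, i') * B x2 $$ (j, j')) * R i' j'))
      = Re (\<Sum>i<d1. \<Sum>j<d2. cnj (X x1 i j) * Z x1 i j)" if x1: "x1 \<in> I1" for x1
  proof -
    have "cnj (A x1 $$ (i, a)) = A x1 $$ (a, i)" if "i < d1" "a < d1" for i a
      using obsA[OF x1] that adj_self_index unfolding observable_def hermitian_def by auto
    thus ?thesis unfolding X_def Y_def Z_def by (rule weighted_kron_form_eq_inner)
  qed
  have X: "fro_sqnorm d1 d2 (X x1) \<le> N" if "x1 \<in> I1" for x1
    unfolding fro_sqnorm_def X_def N_def
    by (subst (1 2) sum.swap) (intro sum_mono observable_contraction obsA that)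
  have Y: "fro_sqnorm d1 d2 (Y x2) \<le> N" if "x2 \<in> I2" for x2
    unfolding fro_sqnorm_def Y_def N_def by (intro sum_mono observable_contraction obsB that)
  have Z: "(\<Sum>x1\<in>I1. fro_sqnorm d1 d2 (Z x1)) = c1 * (\<Sum>x2\<in>I2. fro_sqnorm d1 d2 (Y x2))"
    unfolding Z_def c1_def by (rule sum_fro_sqnorm_orthogonal_combination[OF fin orth])
  have per_x1: "Re (\<Sum>i<d1. \<Sum>j<d2. cnj (X x1 i j) * Z x1 i j) \<le> (t * N + fro_sqnorm d1 d2 (Z x1) / t) / 2"
    if "x1 \<in> I1" for x1
  proof -
    have "t * fro_sqnorm d1 d2 (X x1) \<le> t * N" using X[OF that] t by simp
    moreover have "Re (\<Sum>i<d1. \<Sum>j<d2. cnj (X x1 i j) * Z x1 i j)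
        \<le> (t * fro_sqnorm d1 d2 (X x1) + fro_sqnorm d1 d2 (Z x1) / t) / 2"
      by (rule Re_sum_cnj_mult_le_amgm[OF t])
    ultimately show ?thesis by argo
  qed
  have sum_Y: "(\<Sum>x2\<in>I2. fro_sqnorm d1 d2 (Y x2)) \<le> c2 * N"
    using sum_mono[OF Y] by (simp add: c2_def)
  have "?value = (\<Sum>x1\<in>I1. Re (\<Sum>i<d1. \<Sum>j<d2. cnj (X x1 i j) * Z x1 i j))"
    by (rule sum.cong[OF refl inner])
  also have "\<dots> \<le> (\<Sum>x1\<in>I1. (t * N + fro_sqnorm d1 d2 (Z x1) / t) / 2)"
    by (rule sum_mono[OF per_x1])
  also have "\<dots> = (c1 * t * N + c1 * (\<Sum>x2\<in>I2. fro_sqnorm d1 d2 (Y x2)) / t) / 2"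
    unfolding Z[symmetric] by (simp add: c1_def sum.distrib sum_divide_distrib[symmetric] add_divide_distrib)
  also have "\<dots> \<le> (c1 * t * N + c1 * (c2 * N) / t) / 2"
    using mult_left_mono[OF sum_Y, of c1] t by (simp add: c1_def divide_right_mono)
  also have "\<dots> = c1 * t * N"
  proof -
    have "c1 * (c2 * N) / t = c1 * N * (c2 / t)" by (simp add: ac_simps)
    thus ?thesis using tt by simp
  qed
  finally show ?thesis unfolding c1_def c2_def N_def t_def .
qed

lemma g_mat_column_orthogonality:
  assumes "x2 \<in> {1..M2}" "x2' \<in> {1..M2}"
  shows "(\<Sum>x1\<in>{1..2^(M2 - 1)}. g_mat M2 $$ (x1 - 1, x2 - 1) * g_mat M2 $$ (x1 - 1, x2' - 1))
     = (if x2 = x2' then real (card {1..(2::nat)^(M2 - 1)}) else 0)"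
proof -
  have "(\<Sum>x1\<in>{1..2^(M2 - 1)}. g_mat M2 $$ (x1 - 1, x2 - 1) * g_mat M2 $$ (x1 - 1, x2' - 1))
      = (\<Sum>i<2^(M2 - 1). bit_sign i (x2 - 1) * bit_sign i (x2' - 1))"
    using assms by (simp add: sum.atLeast1_atMost_eq, intro sum.cong refl) (auto simp: g_mat_index)
  also have "\<dots> = (if x2 - 1 = x2' - 1 then 2^(M2 - 1) else 0)"
    using assms by (intro bit_sign_orthogonal) auto
  finally show ?thesis using assms by auto
qed

lemma strategy_value_g_mat_le:
  assumes M2: "M2 \<ge> 1" and qs: "quantum_strategy (2^(M2 - 1)) M2 d1 d2 \<rho> A1 A2"
  shows "strategy_value (g_mat M2) \<rho> A1 A2 \<le> real (2^(M2 - 1)) * sqrt (real M2)"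
proof -
  define M1 :: nat where "M1 = 2^(M2 - 1)"
  define N where "N = d1 * d2"
  have dens: "density_op N \<rho>" and obsA: "\<And>x1. x1 \<in> {1..M1} \<Longrightarrow> observable d1 (A1 x1)"
    and obsB: "\<And>x2. x2 \<in> {1..M2} \<Longrightarrow> observable d2 (A2 x2)"
    using qs unfolding quantum_strategy_def M1_def N_def by auto
  obtain r where tr: "\<And>K. K \<in> carrier_mat N N \<Longrightarrow> mtrace (\<rho> * K) = (\<Sum>m<N. qform (\<lambda>a b. K $$ (a, b)) N (r m))"
    and one: "(\<Sum>m<N. \<Sum>a<N. (cmod (r m a))^2) = 1"
    using density_op_pure_decomp[OF dens] by blast
  define R where "R m i j = r m (i * d2 + j)" for m i j
  define G where "G x1 x2 = g_mat M2 $$ (x1 - 1, x2 - 1)" for x1 x2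
  define T where "T m x1 x2 = (\<Sum>i<d1. \<Sum>j<d2. \<Sum>i'<d1. \<Sum>j'<d2.
            cnj (R m i j) * (A1 x1 $$ (i, i') * A2 x2 $$ (j, j')) * R m i' j')" for m x1 x2
  have trT: "mtrace (\<rho> * kron (A1 x1) (A2 x2)) = (\<Sum>m<N. T m x1 x2)"
    if "x1 \<in> {1..M1}" "x2 \<in> {1..M2}" for x1 x2
  proof -
    have A: "A1 x1 \<in> carrier_mat d1 d1" and B: "A2 x2 \<in> carrier_mat d2 d2"
      using obsA obsB that unfolding observable_def by auto
    show ?thesis
      unfolding tr[OF kron_carrier[OF A B, folded N_def]] N_def T_def R_def qform_kron[OF A B] ..
  qed
  have "strategy_value (g_mat M2) \<rho> A1 A2
      = (\<Sum>m<N. \<Sum>x1\<in>{1..M1}. \<Sum>x2\<in>{1..M2}. G x1 x2 * Re (T m x1 x2))"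
    unfolding strategy_value_def dim_row_g_mat dim_col_g_mat M1_def[symmetric] sum_rotate3[of _ _ _ "{..<N}"]
    by (intro sum.cong refl) (simp add: trT G_def Re_sum sum_distrib_left)
  also have "\<dots> \<le> (\<Sum>m<N. real (card {1..M1}) * sqrt (real (card {1..M2})) * fro_sqnorm d1 d2 (R m))"
    unfolding T_def G_def M1_def
    by (intro sum_mono pure_state_value_le g_mat_column_orthogonality obsA[unfolded M1_def] obsB)
      (use M2 in auto)
  also have "\<dots> = real M1 * sqrt (real M2) * (\<Sum>m<N. fro_sqnorm d1 d2 (R m))"
    by (simp add: sum_distrib_left)
  also have "(\<Sum>m<N. fro_sqnorm d1 d2 (R m)) = 1"
    unfolding one[symmetric] fro_sqnorm_def R_def N_def sum_lessThan_mult ..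
  finally show ?thesis unfolding M1_def by simp
qed

section \<open>Anticommuting observables\<close>

definition pauli_z :: "complex mat" where
  "pauli_z = mat 2 2 (\<lambda>(i, j). if i = j then (if i = 0 then 1 else -1) else 0)"

definition pauli_x :: "complex mat" where
  "pauli_x = mat 2 2 (\<lambda>(i, j). if i = j then 0 else 1)"

lemma sum_lessThan_2: "(\<Sum>k<2. f k) = f 0 + f (1::nat)"
  by (simp add: numeral_2_eq_2)

lemma less_2_iff: "(i::nat) < 2 \<longleftrightarrow> i = 0 \<or> i = 1"
  by auto

lemma pauli_z_carrier: "pauli_z \<in> carrier_mat 2 2"
  and pauli_x_carrier: "pauli_x \<in> carrier_mat 2 2"
  by (simp_all add: pauli_z_def pauli_x_def)

lemma pauli_z_square: "pauli_z * pauli_z = 1\<^sub>m 2"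
  by (rule eq_matI) (auto simp: mult_mat_index_sum[OF pauli_z_carrier pauli_z_carrier]
      sum_lessThan_2 less_2_iff, auto simp: pauli_z_def)

lemma pauli_x_square: "pauli_x * pauli_x = 1\<^sub>m 2"
  by (rule eq_matI) (auto simp: mult_mat_index_sum[OF pauli_x_carrier pauli_x_carrier]
      sum_lessThan_2 less_2_iff, auto simp: pauli_x_def)

lemma pauli_anticommute: "pauli_x * pauli_z = - (pauli_z * pauli_x)"
proof (rule eq_matI)
  fix i j assume "i < dim_row (- (pauli_z * pauli_x))" "j < dim_col (- (pauli_z * pauli_x))"
  hence i: "i < 2" and j: "j < 2" using pauli_z_carrier pauli_x_carrier by auto
  show "(pauli_x * pauli_z) $$ (i, j) = (- (pauli_z * pauli_x)) $$ (i, j)"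
    using i j pauli_z_carrier pauli_x_carrier
      mult_mat_index_sum[OF pauli_x_carrier pauli_z_carrier i j]
      mult_mat_index_sum[OF pauli_z_carrier pauli_x_carrier i j]
    unfolding sum_lessThan_2 less_2_iff by (auto simp: pauli_z_def pauli_x_def)
qed (use pauli_z_carrier pauli_x_carrier in auto)

lemma adj_pauli_z: "adj pauli_z = pauli_z"
  and adj_pauli_x: "adj pauli_x = pauli_x"
  and adj_one_mat: "adj (1\<^sub>m m) = 1\<^sub>m m"
  by (rule eq_matI; auto simp: adj_def pauli_z_def pauli_x_def less_2_iff)+

text \<open>Jordan-Wigner: \<open>clifford_gen n j = Z \<otimes> \<dots> \<otimes> Z \<otimes> X \<otimes> I \<otimes> \<dots> \<otimes> I\<close> with \<open>n - 1 - j\<close>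
  factors \<open>Z\<close>.\<close>
fun clifford_gen :: "nat \<Rightarrow> nat \<Rightarrow> complex mat" where
  "clifford_gen 0 j = 1\<^sub>m 1"
| "clifford_gen (Suc n) j =
    (if j < n then kron pauli_z (clifford_gen n j) else kron pauli_x (1\<^sub>m (2^n)))"

lemma clifford_gen_carrier: "clifford_gen n j \<in> carrier_mat (2^n) (2^n)"
  by (induction n) (auto intro: kron_carrier[OF pauli_z_carrier, simplified]
      kron_carrier[OF pauli_x_carrier one_carrier_mat, simplified])

lemma clifford_gen_hermitian: "adj (clifford_gen n j) = clifford_gen n j"
  by (induction n) (simp_all add: adj_one_mat kron_adj[OF pauli_z_carrier clifford_gen_carrier]
      kron_adj[OF pauli_x_carrier one_carrier_mat] adj_pauli_z adj_pauli_x)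

lemma clifford_gen_square: "clifford_gen n j * clifford_gen n j = 1\<^sub>m (2^n)"
proof (induction n)
  case (Suc n)
  have "kron pauli_z (clifford_gen n j) * kron pauli_z (clifford_gen n j) = 1\<^sub>m (2 * 2^n)"
    using Suc by (simp add: kron_mult[OF pauli_z_carrier pauli_z_carrier clifford_gen_carrier
        clifford_gen_carrier] pauli_z_square kron_one)
  moreover have "kron pauli_x (1\<^sub>m (2^n)) * kron pauli_x (1\<^sub>m (2^n)) = 1\<^sub>m (2 * 2^n)"
    by (simp add: kron_mult[OF pauli_x_carrier pauli_x_carrier one_carrier_mat one_carrier_mat]
        pauli_x_square kron_one)
  ultimately show ?case by simp
qed simp

lemma clifford_gen_anticommute:
  "j < n \<Longrightarrow> k < n \<Longrightarrow> j \<noteq> k \<Longrightarrow> clifford_gen n j * clifford_gen n k = - (clifford_gen n k * clifford_gen n j)"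
proof (induction n arbitrary: j k)
  case (Suc n)
  note C = clifford_gen_carrier[of n] and I = one_carrier_mat[of "2^n"]
    and Z = pauli_z_carrier and X = pauli_x_carrier
  have ZX: "pauli_z * pauli_x \<in> carrier_mat 2 2" using Z X by simp
  have mixed: "clifford_gen (Suc n) i * clifford_gen (Suc n) n = - (clifford_gen (Suc n) n * clifford_gen (Suc n) i)"
    if "i < n" for i
  proof -
    have "clifford_gen (Suc n) i * clifford_gen (Suc n) n = kron (pauli_z * pauli_x) (clifford_gen n i)"
      using that kron_mult[OF Z X C I] right_mult_one_mat[OF C] by simp
    moreover have "clifford_gen (Suc n) n * clifford_gen (Suc n) i = kron (pauli_x * pauli_z) (clifford_gen n i)"
      using that kron_mult[OF X Z I C] left_mult_one_mat[OF C] by simp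
    ultimately show ?thesis
      unfolding pauli_anticommute kron_uminus_left[OF ZX C] by simp
  qed
  consider "j < n" "k < n" | "j < n" "k = n" | "j = n" "k < n" using Suc.prems by linarith
  thus ?case
  proof cases
    case 1
    have CC: "clifford_gen n k * clifford_gen n j \<in> carrier_mat (2^n) (2^n)" by (rule mult_carrier_mat[OF C C])
    have "clifford_gen (Suc n) j * clifford_gen (Suc n) k = kron (1\<^sub>m 2) (clifford_gen n j * clifford_gen n k)"
      using 1 kron_mult[OF Z Z C C] by (simp add: pauli_z_square)
    also have "\<dots> = - kron (1\<^sub>m 2) (clifford_gen n k * clifford_gen n j)"
      using Suc.IH[OF 1 Suc.prems(3)] kron_uminus_right[OF one_carrier_mat CC] by simp
    also have "kron (1\<^sub>m 2) (clifford_gen n k * clifford_gen n j) = clifford_gen (Suc n) k * clifford_gen (Suc n) j"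
      using 1 kron_mult[OF Z Z C C] by (simp add: pauli_z_square)
    finally show ?thesis .
  next
    case 2
    thus ?thesis using mixed by simp
  next
    case 3
    thus ?thesis using mixed[of k] by simp
  qed
qed simp

lemma mtrace_clifford_gen_mult:
  assumes "j < n" "k < n"
  shows "mtrace (clifford_gen n j * clifford_gen n k) = (if j = k then 2^n else 0)"
proof (cases "j = k")
  case True thus ?thesis by (simp add: clifford_gen_square mtrace_def)
next
  case False
  have "mtrace (clifford_gen n j * clifford_gen n k) = mtrace (clifford_gen n k * clifford_gen n j)"
    by (rule mtrace_comm[OF clifford_gen_carrier clifford_gen_carrier])
  also have "\<dots> = - mtrace (clifford_gen n j * clifford_gen n k)"
    unfolding clifford_gen_anticommute[OF assms(2,1) False[symmetric]]
    by (rule mtrace_uminus[OF mult_carrier_mat[OF clifford_gen_carrier clifford_gen_carrier]])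
  finally show ?thesis using False by simp
qed

lemma observable_of_involution:
  assumes A: "A \<in> carrier_mat d d" and h: "adj A = A" and sq: "A * A = 1\<^sub>m d"
  shows "observable d A"
  unfolding observable_def hermitian_def
proof (intro conjI allI impI)
  show "A \<in> carrier_mat d d" "A \<in> carrier_mat (dim_row A) (dim_row A)" "adj A = A"
    using A h by auto
  fix l assume "eigenvalue A l"
  then obtain v where v: "v \<in> carrier_vec d" "v \<noteq> 0\<^sub>v d" "A *\<^sub>v v = l \<cdot>\<^sub>v v"
    using A unfolding eigenvalue_def eigenvector_def by auto
  obtain i where i: "i < d" "v $ i \<noteq> 0"
    using v(1,2) by (metis carrier_vecD eq_vecI index_zero_vec(1) index_zero_vec(2))
  have "v = A *\<^sub>v (A *\<^sub>v v)" using sq v(1) assoc_mult_mat_vec[OF A A v(1)] by simp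
  also have "\<dots> = l \<cdot>\<^sub>v (l \<cdot>\<^sub>v v)" using mult_mat_vec[OF A v(1)] v(3) by simp
  finally have "v $ i = l * (l * v $ i)" using i v(1) by (metis carrier_vecD index_smult_vec(1) smult_carrier_vec)
  hence "l * l = 1" using i(2) by (metis mult.assoc mult_cancel_right1)
  hence "l = 1 \<or> l = -1" by (simp add: square_eq_1_iff)
  thus "l \<in> \<real>" "-1 \<le> Re l" "Re l \<le> 1" by auto
qed

lemma observable_transpose_of_involution:
  assumes A: "A \<in> carrier_mat d d" and h: "adj A = A" and sq: "A * A = 1\<^sub>m d"
  shows "observable d (transpose_mat A)"
proof (rule observable_of_involution)
  show "transpose_mat A \<in> carrier_mat d d" using A by simp
  show "adj (transpose_mat A) = transpose_mat A"
    using A adj_self_index[OF h A] by (intro eq_matI) (auto simp: adj_def)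
  show "transpose_mat A * transpose_mat A = 1\<^sub>m d"
    using transpose_mult[OF A A] sq by simp
qed

definition clifford_comb :: "nat \<Rightarrow> (nat \<Rightarrow> real) \<Rightarrow> complex mat" where
  "clifford_comb n c = mat (2^n) (2^n) (\<lambda>(a, b). \<Sum>j<n. complex_of_real (c j) * clifford_gen n j $$ (a, b))"

lemma clifford_comb_carrier: "clifford_comb n c \<in> carrier_mat (2^n) (2^n)"
  by (simp add: clifford_comb_def)

lemma clifford_comb_hermitian: "adj (clifford_comb n c) = clifford_comb n c"
  using adj_self_index[OF clifford_gen_hermitian clifford_gen_carrier]
  by (intro eq_matI) (auto simp: adj_def clifford_comb_def cnj_sum)

lemma clifford_comb_mult_index:
  assumes "a < 2^n" "b < 2^n"
  shows "(clifford_comb n c * clifford_comb n c') $$ (a, b)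
    = (\<Sum>j<n. \<Sum>k<n. complex_of_real (c j * c' k) * (clifford_gen n j * clifford_gen n k) $$ (a, b))"
proof -
  have "(clifford_comb n c * clifford_comb n c') $$ (a, b)
      = (\<Sum>e<2^n. \<Sum>j<n. \<Sum>k<n. complex_of_real (c j * c' k) * (clifford_gen n j $$ (a, e) * clifford_gen n k $$ (e, b)))"
    using assms unfolding mult_mat_index_sum[OF clifford_comb_carrier clifford_comb_carrier assms]
    by (intro sum.cong refl) (simp add: clifford_comb_def sum_product ac_simps)
  also have "\<dots> = (\<Sum>j<n. \<Sum>k<n. \<Sum>e<2^n. complex_of_real (c j * c' k) * (clifford_gen n j $$ (a, e) * clifford_gen n k $$ (e, b)))"
    by (rule sum_rotate3)
  also have "\<dots> = (\<Sum>j<n. \<Sum>k<n. complex_of_real (c j * c' k) * (clifford_gen n j * clifford_gen n k) $$ (a, b))"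
    using assms by (simp add: mult_mat_index_sum[OF clifford_gen_carrier clifford_gen_carrier] sum_distrib_left)
  finally show ?thesis .
qed

text \<open>The cross terms cancel in pairs by anticommutation.\<close>
lemma clifford_comb_square:
  assumes unit: "(\<Sum>j<n. (c j)^2) = 1"
  shows "clifford_comb n c * clifford_comb n c = 1\<^sub>m (2^n)"
proof (rule eq_matI)
  fix a b assume "a < dim_row (1\<^sub>m (2^n))" "b < dim_col (1\<^sub>m (2^n))"
  hence a: "a < 2^n" and b: "b < 2^n" by auto
  define F where "F j k = complex_of_real (c j * c k) * (clifford_gen n j * clifford_gen n k) $$ (a, b)" for j k
  have pair: "F j k + F k j = (if j = k then 2 * of_real ((c j)^2) * 1\<^sub>m (2^n) $$ (a, b) else 0)"
    if "j < n" "k < n" for j k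
  proof (cases "j = k")
    case False
    have "clifford_gen n j * clifford_gen n k \<in> carrier_mat (2^n) (2^n)"
      by (rule mult_carrier_mat[OF clifford_gen_carrier clifford_gen_carrier])
    hence "(- (clifford_gen n j * clifford_gen n k)) $$ (a, b) = - ((clifford_gen n j * clifford_gen n k) $$ (a, b))"
      using a b by (metis carrier_matD(1,2) index_uminus_mat(1))
    hence "(clifford_gen n k * clifford_gen n j) $$ (a, b) = - ((clifford_gen n j * clifford_gen n k) $$ (a, b))"
      using clifford_gen_anticommute[OF that(2,1)] False by simp
    thus ?thesis unfolding F_def using False by (simp add: ac_simps)
  qed (simp add: F_def clifford_gen_square a b power2_eq_square)
  have "2 * (\<Sum>j<n. \<Sum>k<n. F j k) = (\<Sum>j<n. \<Sum>k<n. F j k) + (\<Sum>j<n. \<Sum>k<n. F k j)"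
    by (subst (2) sum.swap) simp
  also have "\<dots> = (\<Sum>j<n. \<Sum>k<n. F j k + F k j)"
    by (simp add: sum.distrib)
  also have "\<dots> = (\<Sum>j<n. \<Sum>k<n. if j = k then 2 * of_real ((c j)^2) * 1\<^sub>m (2^n) $$ (a, b) else 0)"
    by (intro sum.cong refl pair) auto
  also have "\<dots> = (\<Sum>j<n. 2 * of_real ((c j)^2) * 1\<^sub>m (2^n) $$ (a, b))"
    by (simp add: sum.delta)
  also have "\<dots> = 2 * (\<Sum>j<n. (complex_of_real (c j))^2) * 1\<^sub>m (2^n) $$ (a, b)"
    by (simp add: sum_distrib_left sum_distrib_right)
  also have "(\<Sum>j<n. (complex_of_real (c j))^2) = 1"
    using arg_cong[OF unit, of complex_of_real] by simp
  finally show "(clifford_comb n c * clifford_comb n c) $$ (a, b) = 1\<^sub>m (2^n) $$ (a, b)"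
    unfolding clifford_comb_mult_index[OF a b] F_def by simp
qed (simp_all add: clifford_comb_def)

lemma mtrace_clifford_comb_mult_gen:
  assumes k: "k < n"
  shows "mtrace (clifford_comb n c * clifford_gen n k) = complex_of_real (c k) * 2^n"
proof -
  have "mtrace (clifford_comb n c * clifford_gen n k)
      = (\<Sum>i<2^n. \<Sum>i'<2^n. \<Sum>j<n. complex_of_real (c j) * (clifford_gen n j $$ (i, i') * clifford_gen n k $$ (i', i)))"
    unfolding mtrace_mult[OF clifford_comb_carrier clifford_gen_carrier]
    by (intro sum.cong refl) (simp add: clifford_comb_def sum_distrib_right mult.assoc)
  also have "\<dots> = (\<Sum>j<n. \<Sum>i<2^n. \<Sum>i'<2^n. complex_of_real (c j) * (clifford_gen n j $$ (i, i') * clifford_gen n k $$ (i', i)))"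
    by (rule sum_rotate3[symmetric])
  also have "\<dots> = (\<Sum>j<n. complex_of_real (c j) * mtrace (clifford_gen n j * clifford_gen n k))"
    by (simp add: mtrace_mult[OF clifford_gen_carrier clifford_gen_carrier] sum_distrib_left)
  also have "\<dots> = (\<Sum>j<n. if j = k then complex_of_real (c j) * 2^n else 0)"
    by (intro sum.cong refl) (simp add: mtrace_clifford_gen_mult k)
  also have "\<dots> = complex_of_real (c k) * 2^n"
    using k by (simp add: sum.delta)
  finally show ?thesis .
qed

section \<open>An optimal strategy\<close>

lemma rank_one_form_nonneg:
  assumes v: "v \<in> carrier_vec N"
  shows "0 \<le> Re (conjugate v \<bullet> (mat N N (\<lambda>(p, q). \<psi> p * cnj (\<psi> q)) *\<^sub>v v))"
proof -
  define w where "w = (\<Sum>a<N. cnj (v $ a) * \<psi> a)"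
  have "conjugate v \<bullet> (mat N N (\<lambda>(p, q). \<psi> p * cnj (\<psi> q)) *\<^sub>v v)
      = (\<Sum>a<N. \<Sum>b<N. (cnj (v $ a) * \<psi> a) * (cnj (\<psi> b) * v $ b))"
    using v by (simp add: scalar_prod_def lessThan_atLeast0 sum_distrib_left ac_simps)
  also have "\<dots> = w * cnj w"
    unfolding w_def cnj_sum sum_product by (simp add: ac_simps)
  also have "\<dots> = complex_of_real ((cmod w)^2)" by (rule complex_norm_square[symmetric])
  finally show ?thesis by simp
qed

definition max_entangled_vec :: "nat \<Rightarrow> nat \<Rightarrow> complex" where
  "max_entangled_vec d p = complex_of_real (1 / sqrt (real d)) * unit_fun (p div d) (p mod d)"

definition max_entangled :: "nat \<Rightarrow> complex mat" where
  "max_entangled d = mat (d * d) (d * d) (\<lambda>(p, q). max_entangled_vec d p * cnj (max_entangled_vec d q))"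

lemma max_entangled_carrier: "max_entangled d \<in> carrier_mat (d * d) (d * d)"
  by (simp add: max_entangled_def)

lemma max_entangled_vec_mult_add:
  "j < d \<Longrightarrow> max_entangled_vec d (i * d + j) = complex_of_real (1 / sqrt (real d)) * unit_fun i j"
  by (simp add: max_entangled_vec_def)

lemma mtrace_max_entangled_mult:
  assumes K: "K \<in> carrier_mat (d * d) (d * d)"
  shows "mtrace (max_entangled d * K) = qform (\<lambda>a b. K $$ (a, b)) (d * d) (max_entangled_vec d)"
  unfolding mtrace_mult[OF max_entangled_carrier K] qform_def
  by (subst sum.swap) (simp add: max_entangled_def ac_simps)

lemma density_op_max_entangled:
  assumes d: "d > 0"
  shows "density_op (d * d) (max_entangled d)"
  unfolding density_op_def hermitian_def
proof (intro conjI ballI)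
  show "max_entangled d \<in> carrier_mat (d * d) (d * d)" by (rule max_entangled_carrier)
  thus "max_entangled d \<in> carrier_mat (dim_row (max_entangled d)) (dim_row (max_entangled d))" by simp
  show "adj (max_entangled d) = max_entangled d"
    by (rule eq_matI) (auto simp: adj_def max_entangled_def)
  show "0 \<le> Re (conjugate v \<bullet> (max_entangled d *\<^sub>v v))" if "v \<in> carrier_vec (d * d)" for v
    unfolding max_entangled_def by (rule rank_one_form_nonneg[OF that])
  have "mtrace (max_entangled d) = (\<Sum>p<d * d. max_entangled_vec d p * cnj (max_entangled_vec d p))"
    by (simp add: mtrace_def max_entangled_def)
  also have "\<dots> = (\<Sum>i<d. \<Sum>j<d. complex_of_real (1 / real d) * unit_fun i j)"
    unfolding sum_lessThan_mult
  proof (intro sum.cong refl)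
    fix i j assume "j \<in> {..<d}"
    moreover have "complex_of_real (1 / sqrt (real d)) * complex_of_real (1 / sqrt (real d))
        = complex_of_real (1 / real d)"
      using d by (simp flip: of_real_mult)
    ultimately show "max_entangled_vec d (i * d + j) * cnj (max_entangled_vec d (i * d + j))
        = complex_of_real (1 / real d) * unit_fun i j"
      by (simp add: max_entangled_vec_mult_add unit_fun_def)
  qed
  also have "\<dots> = (\<Sum>i<d. complex_of_real (1 / real d))"
    using sum_mult_unit_fun[of _ d "\<lambda>_. complex_of_real (1 / real d)"] by simp
  also have "\<dots> = 1"
    using d by simp
  finally show "mtrace (max_entangled d) = 1" .
qed

lemma mtrace_max_entangled_kron:
  assumes d: "d > 0" and A: "A \<in> carrier_mat d d" and B: "B \<in> carrier_mat d d"
  shows "mtrace (max_entangled d * kron A B) = mtrace (A * transpose_mat B) / of_nat d"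
proof -
  define s where "s = complex_of_real (1 / sqrt (real d))"
  have ss: "cnj s * s = 1 / of_nat d" unfolding s_def using d by (simp flip: of_real_mult)
  have "mtrace (max_entangled d * kron A B)
      = (\<Sum>i<d. \<Sum>j<d. \<Sum>i'<d. \<Sum>j'<d. cnj s * s * (unit_fun i j * (A $$ (i, i') * B $$ (j, j'))) * unit_fun i' j')"
    unfolding mtrace_max_entangled_mult[OF kron_carrier[OF A B]] qform_kron[OF A B]
  proof (intro sum.cong refl)
    fix i j i' j' assume "j \<in> {..<d}" "j' \<in> {..<d}"
    hence "max_entangled_vec d (i * d + j) = s * unit_fun i j"
      and "max_entangled_vec d (i' * d + j') = s * unit_fun i' j'"
      unfolding s_def by (simp_all add: max_entangled_vec_mult_add)
    thus "cnj (max_entangled_vec d (i * d + j)) * (A $$ (i, i') * B $$ (j, j')) * max_entangled_vec d (i' * d + j')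
        = cnj s * s * (unit_fun i j * (A $$ (i, i') * B $$ (j, j'))) * unit_fun i' j'"
      by (simp only: complex_cnj_mult cnj_unit_fun) (simp add: ac_simps)
  qed
  also have "\<dots> = (\<Sum>i<d. \<Sum>j<d. \<Sum>i'<d. cnj s * s * (unit_fun i j * (A $$ (i, i') * B $$ (j, i'))))"
    by (intro sum.cong refl) (simp only: sum_mult_unit_fun lessThan_iff)
  also have "\<dots> = (\<Sum>i<d. \<Sum>i'<d. \<Sum>j<d. unit_fun i j * (cnj s * s * (A $$ (i, i') * B $$ (j, i'))))"
    by (rule sum.cong[OF refl], subst sum.swap, intro sum.cong refl) (simp add: ac_simps)
  also have "\<dots> = (\<Sum>i<d. \<Sum>i'<d. (cnj s * s) * (A $$ (i, i') * B $$ (i, i')))"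
    by (intro sum.cong refl) (simp add: sum_unit_fun_mult)
  also have "\<dots> = mtrace (A * transpose_mat B) / of_nat d"
    unfolding mtrace_mult[OF A transpose_carrier_mat[THEN iffD2, OF B]] ss
    using B by (simp add: sum_divide_distrib)
  finally show ?thesis .
qed

definition alice_obs :: "nat \<Rightarrow> nat \<Rightarrow> complex mat" where
  "alice_obs M2 x1 = clifford_comb M2 (\<lambda>j. bit_sign (x1 - 1) j / sqrt (real M2))"

definition bob_obs :: "nat \<Rightarrow> nat \<Rightarrow> complex mat" where
  "bob_obs M2 x2 = transpose_mat (clifford_gen M2 (x2 - 1))"

lemma quantum_strategy_optimal:
  assumes "M2 \<ge> 1"
  shows "quantum_strategy (2^(M2 - 1)) M2 (2^M2) (2^M2) (max_entangled (2^M2)) (alice_obs M2) (bob_obs M2)"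
proof -
  have "(\<Sum>j<M2. (bit_sign i j / sqrt (real M2))^2) = 1" for i
    using assms by (simp add: power_divide power2_eq_square bit_sign_square)
  thus ?thesis
    unfolding quantum_strategy_def alice_obs_def bob_obs_def
    using density_op_max_entangled[of "2^M2"]
      observable_of_involution[OF clifford_comb_carrier clifford_comb_hermitian clifford_comb_square]
      observable_transpose_of_involution[OF clifford_gen_carrier clifford_gen_hermitian clifford_gen_square]
    by (simp add: power_add[symmetric] mult_2[symmetric])
qed

lemma strategy_value_optimal:
  assumes "M2 \<ge> 1"
  shows "strategy_value (g_mat M2) (max_entangled (2^M2)) (alice_obs M2) (bob_obs M2)
    = real (2^(M2 - 1)) * sqrt (real M2)"
proof -
  define d :: nat where "d = 2^M2"
  have term_value: "g_mat M2 $$ (x1 - 1, x2 - 1) * Re (mtrace (max_entangled d * kron (alice_obs M2 x1) (bob_obs M2 x2)))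
      = 1 / sqrt (real M2)" if "x1 \<in> {1..2^(M2 - 1)}" "x2 \<in> {1..M2}" for x1 x2
  proof -
    have "mtrace (max_entangled d * kron (alice_obs M2 x1) (bob_obs M2 x2))
        = mtrace (alice_obs M2 x1 * clifford_gen M2 (x2 - 1)) / of_nat d"
      unfolding d_def bob_obs_def alice_obs_def
      by (simp add: mtrace_max_entangled_kron clifford_comb_carrier clifford_gen_carrier)
    also have "\<dots> = complex_of_real (bit_sign (x1 - 1) (x2 - 1) / sqrt (real M2))"
      using mtrace_clifford_comb_mult_gen[of "x2 - 1" M2] that unfolding alice_obs_def d_def
      by auto
    moreover have "g_mat M2 $$ (x1 - 1, x2 - 1) = bit_sign (x1 - 1) (x2 - 1)"
      using that by (intro g_mat_index) auto
    ultimately show ?thesis using bit_sign_square[of "x1 - 1" "x2 - 1"] by simp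
  qed
  have "strategy_value (g_mat M2) (max_entangled d) (alice_obs M2) (bob_obs M2)
      = (\<Sum>x1\<in>{1..(2::nat)^(M2 - 1)}. \<Sum>x2\<in>{1..M2}. 1 / sqrt (real M2))"
    unfolding strategy_value_def dim_row_g_mat dim_col_g_mat by (intro sum.cong refl term_value)
  also have "\<dots> = real (2^(M2 - 1)) * (real M2 / sqrt (real M2))" by simp
  also have "real M2 / sqrt (real M2) = sqrt (real M2)" by (rule real_div_sqrt) simp
  finally show ?thesis unfolding d_def .
qed

lemma quantum_value_eqI:
  assumes upper: "\<And>d1 d2 \<rho> A1 A2. quantum_strategy (dim_row g) (dim_col g) d1 d2 \<rho> A1 A2 \<Longrightarrow>
      strategy_value g \<rho> A1 A2 \<le> v"
    and attained: "quantum_strategy (dim_row g) (dim_col g) d1 d2 \<rho> A1 A2" "strategy_value g \<rho> A1 A2 = v"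
  shows "quantum_value g = ereal v"
  unfolding quantum_value_def
proof (rule antisym)
  show "(SUP s\<in>{(d1, d2, \<rho>, A1, A2). quantum_strategy (dim_row g) (dim_col g) d1 d2 \<rho> A1 A2}.
      ereal (case s of (d1, d2, \<rho>, A1, A2) \<Rightarrow> strategy_value g \<rho> A1 A2)) \<le> ereal v"
    using upper by (intro SUP_least) auto
  show "ereal v \<le> (SUP s\<in>{(d1, d2, \<rho>, A1, A2). quantum_strategy (dim_row g) (dim_col g) d1 d2 \<rho> A1 A2}.
      ereal (case s of (d1, d2, \<rho>, A1, A2) \<Rightarrow> strategy_value g \<rho> A1 A2))"
    using attained by (intro SUP_upper2[of "(d1, d2, \<rho>, A1, A2)"]) auto
qed

theorem mainTheorem10:
  fixes M2 :: nat
  assumes "M2 \<ge> 1"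
  defines "M1 \<equiv> (2::nat) ^ (M2 - 1)"
  shows "(\<forall>\<sigma> \<in> singular_values (g_mat M2). \<sigma> = sqrt (real M1))
    \<and> quantum_value (g_mat M2) = ereal (real M1 * sqrt (real M2))
    \<and> (\<exists>d1 d2 \<rho> A1 A2. quantum_strategy M1 M2 d1 d2 \<rho> A1 A2 \<and>
          strategy_value (g_mat M2) \<rho> A1 A2 = real M1 * sqrt (real M2))"
proof (intro conjI)
  show "\<forall>\<sigma> \<in> singular_values (g_mat M2). \<sigma> = sqrt (real M1)"
    unfolding M1_def using singular_values_g_mat[OF assms(1)] by blast
  note optimal = quantum_strategy_optimal[OF assms(1)] strategy_value_optimal[OF assms(1)]
  show "quantum_value (g_mat M2) = ereal (real M1 * sqrt (real M2))"
    unfolding M1_def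
    by (rule quantum_value_eqI) (use optimal strategy_value_g_mat_le[OF assms(1)] in auto)
  show "\<exists>d1 d2 \<rho> A1 A2. quantum_strategy M1 M2 d1 d2 \<rho> A1 A2 \<and>
      strategy_value (g_mat M2) \<rho> A1 A2 = real M1 * sqrt (real M2)"
    unfolding M1_def using optimal by blast
qed

end
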